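(* Let $p\ge1$, $\boldsymbol M=(M_t)_{t\in[0,T]}\in C_T(\mathcal{P}(\mathcal{P}(\mathbb{R}^d)))$, and $b:[0,T]\times\mathbb{R}^d\times\mathcal{P}(\mathbb{R}^d)\to\mathbb{R}^d$ Borel with $\int_0^T\int\int|b(t,x,\mu)|^pd\mu(x)dM_t(\mu)dt<+\infty$, such that for every $F\in\operatorname{Cyl}^1_c(\mathcal{P}(\mathbb{R}^d))$, $\frac{d}{dt}\int F\,dM_t=\int\int\nabla_WF(x,\mu)\cdot b(t,x,\mu)\,d\mu(x)\,dM_t(\mu)$ in $\mathscr D'(0,T)$. Then: (i) if $M_0$ is concentrated on $\mathcal{P}_p(\mathbb{R}^d)$, then $M_t$ is concentrated on $\mathcal{P}_p(\mathbb{R}^d)$ for all $t\in[0,T]$; (ii) if $M_0\in\mathcal{P}_p(\mathcal{P}_p(\mathbb{R}^d))$, then $M_t\in\mathcal{P}_p(\mathcal{P}_p(\mathbb{R}^d))$ for all $t\in[0,T]$.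
   Context: Cylinder functions: $F(\mu)=\Psi(\int\phi_1d\mu,\dots,\int\phi_kd\mu)$ with $\phi_i\in C^1_c(\mathbb{R}^d)$, $\Psi\in C^1_b(\mathbb{R}^k)$; $\nabla_WF(x,\mu)=\sum_i\partial_i\Psi(\int\phi_1d\mu,\dots)\nabla\phi_i(x)$. $\mathcal P_p(\mathbb R^d)$: probability measures with finite $p$-th moment; $\mathcal P_p(\mathcal P_p(\mathbb R^d))$: $M$ concentrated on $\mathcal P_p(\mathbb R^d)$ with $\int\int|x|^pd\mu\,dM(\mu)<\infty$. *)

theory Defs
  imports "HOL-Analysis.Analysis" "HOL-Probability.Probability"
begin

text \<open>Probability measures on R^d (Giry sigma-algebra = Borel sigma-algebra of the narrow topology).\<close>
abbreviation Pd :: "'a::euclidean_space measure set" where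
  "Pd \<equiv> space (prob_algebra (borel :: 'a measure))"

definition pmom :: "real \<Rightarrow> 'a::euclidean_space measure \<Rightarrow> ennreal" where
  "pmom p \<mu> = (\<integral>\<^sup>+ x. ennreal (norm x powr p) \<partial>\<mu>)"

definition narrow_conv :: "(nat \<Rightarrow> 'a::euclidean_space measure) \<Rightarrow> 'a measure \<Rightarrow> bool" where
  "narrow_conv \<mu>s \<mu> \<longleftrightarrow>
     (\<forall>f :: 'a \<Rightarrow> real. continuous_on UNIV f \<and> bounded (range f) \<longrightarrow>
        (\<lambda>n. \<integral>x. f x \<partial>(\<mu>s n)) \<longlonglongrightarrow> (\<integral>x. f x \<partial>\<mu>))"

text \<open>Continuity of a real function on P(R^d) with respect to the narrow topology
  (sequential; the narrow topology on P(R^d) is metrizable).\<close>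
definition narrow_continuous :: "('a::euclidean_space measure \<Rightarrow> real) \<Rightarrow> bool" where
  "narrow_continuous \<Phi> \<longleftrightarrow>
     (\<forall>\<mu>s \<mu>. (\<forall>n. \<mu>s n \<in> Pd) \<and> \<mu> \<in> Pd \<and> narrow_conv \<mu>s \<mu> \<longrightarrow>
        (\<lambda>n. \<Phi> (\<mu>s n)) \<longlonglongrightarrow> \<Phi> \<mu>)"

definition narrow_curve :: "real \<Rightarrow> (real \<Rightarrow> 'a::euclidean_space measure measure) \<Rightarrow> bool" where
  "narrow_curve T M \<longleftrightarrow>
     (\<forall>t\<in>{0..T}. M t \<in> space (prob_algebra (prob_algebra (borel :: 'a measure)))) \<and>
     (\<forall>t\<in>{0..T}. \<forall>ts. (\<forall>n. ts n \<in> {0..T}) \<and> ts \<longlonglongrightarrow> t \<longrightarrow>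
        (\<forall>\<Phi> :: 'a measure \<Rightarrow> real.
           \<Phi> \<in> borel_measurable (prob_algebra borel) \<and> bounded (\<Phi> ` Pd) \<and> narrow_continuous \<Phi> \<longrightarrow>
           (\<lambda>n. \<integral>\<mu>. \<Phi> \<mu> \<partial>(M (ts n))) \<longlonglongrightarrow> (\<integral>\<mu>. \<Phi> \<mu> \<partial>(M t))))"

definition C1c_grad :: "('a::euclidean_space \<Rightarrow> real) \<Rightarrow> ('a \<Rightarrow> 'a) \<Rightarrow> bool" where
  "C1c_grad \<phi> g \<longleftrightarrow>
     (\<forall>x. (\<phi> has_derivative (\<lambda>h. g x \<bullet> h)) (at x)) \<and> continuous_on UNIV g \<and>
     compact (closure {x. \<phi> x \<noteq> 0})"

text \<open>Psi in C^1_b(R^k), R^k represented by functions nat => real depending only on the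
  first k coordinates; D i is the i-th partial derivative.\<close>
definition C1b_partials :: "nat \<Rightarrow> ((nat \<Rightarrow> real) \<Rightarrow> real) \<Rightarrow> (nat \<Rightarrow> (nat \<Rightarrow> real) \<Rightarrow> real) \<Rightarrow> bool" where
  "C1b_partials k \<Psi> D \<longleftrightarrow>
     (\<forall>y z. (\<forall>i<k. y i = z i) \<longrightarrow> \<Psi> y = \<Psi> z) \<and>
     (\<forall>i<k. \<forall>y z. (\<forall>j<k. y j = z j) \<longrightarrow> D i y = D i z) \<and>
     bounded (range \<Psi>) \<and> (\<forall>i<k. bounded (range (D i))) \<and>
     (\<forall>i<k. \<forall>y. ((\<lambda>s. \<Psi> (y(i := s))) has_real_derivative D i y) (at (y i))) \<and>
     (\<forall>i<k. continuous_on UNIV (D i))"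

definition test_fun :: "real \<Rightarrow> (real \<Rightarrow> real) \<Rightarrow> bool" where
  "test_fun T \<eta> \<longleftrightarrow>
     (\<forall>n x. ((deriv ^^ n) \<eta>) differentiable (at x)) \<and>
     (\<exists>a b. 0 < a \<and> a \<le> b \<and> b < T \<and> (\<forall>t. t \<notin> {a..b} \<longrightarrow> \<eta> t = 0))"

end

theory Submission
  imports Defs "HOL-Computational_Algebra.Polynomial"
begin

(*
  Write <x>^p = (1 + |x|^2)^(p/2) and, for R > 0, phi_R = R tau(<x>^p / R), where tau is a concave
  C^1 cap equal to the identity on [0, 1] and to 3/2 on [2, oo).  Then phi_R - 3R/2 lies in C^1_c,
  phi_R increases to <x>^p as R grows, and since tau'(u) u <= 2 tau(u), Young's inequality gives
  |grad phi_R . v| <= 2 p d phi_R + p d^(1-p) |v|^p for every d > 0.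

  Test the continuity equation with the cylinder function mu |-> Psi_a(m_R(mu)), where
  m_R(mu) = integral phi_R dmu and Psi_a(s) = a arctan(s/a).  A continuous function whose weak
  derivative h has integral of |h| at most L increases by at most L, so
    int Psi_a(m_R) dM_t - int Psi_a(m_R) dM_0 <= 2 p d T sup_s int Psi_a'(m_R) m_R dM_s + p d^(1-p) K,
  with K the L^p energy of b.
  (i) As Psi_a'(s) s <= a/2, letting R -> oo shows that the measures with infinite p-th moment
  carry M_t-mass at most (2/pi) (int arctan(<x>^p-moment / a) dM_0 + p d T + p d^(1-p) K / a);
  now let a -> oo and then d -> 0.
  (ii) For a = 3R/2 we have s/2 <= Psi_a(s) <= s on the range of m_R, so v(t) = int m_R dM_t satisfies
  v(t)/2 <= v(0) + 2 p d T sup v + p d^(1-p) K; the choice d = 1/(8pT) absorbs sup v, which bounds v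
  uniformly in R, and Fatou's lemma concludes.

  In the formal text <x>^p is bracket_pow, tau is soft_cap, phi_R is capped_bracket_pow,
  m_R is capped_moment and Psi_a is arctan_cap.
*)

section \<open>Smooth plateau functions\<close>

definition iter_differentiable :: "nat \<Rightarrow> (real \<Rightarrow> real) \<Rightarrow> bool" where
  "iter_differentiable n f \<longleftrightarrow> (\<forall>m<n. \<forall>x. (deriv ^^ m) f differentiable (at x))"

lemma iter_differentiable_0[simp]: "iter_differentiable 0 f" by (simp add: iter_differentiable_def)

lemma iter_differentiable_Suc: "iter_differentiable (Suc n) f \<longleftrightarrow> (\<forall>x. f differentiable (at x)) \<and> iter_differentiable n (deriv f)"
proof -
  have *: "(deriv ^^ Suc m) f = (deriv ^^ m) (deriv f)" for m
    by (simp add: funpow_Suc_right del: funpow.simps)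
  show ?thesis unfolding iter_differentiable_def
  proof (intro iffI conjI allI impI)
    assume "\<forall>m<Suc n. \<forall>x. (deriv ^^ m) f differentiable at x"
    then show "f differentiable at x" for x by (metis funpow_0 zero_less_Suc)
    fix m x assume "\<forall>m<Suc n. \<forall>x. (deriv ^^ m) f differentiable at x" "m < n"
    then show "(deriv ^^ m) (deriv f) differentiable at x" by (metis * Suc_mono)
  next
    fix m x assume a: "(\<forall>x. f differentiable at x) \<and> (\<forall>m<n. \<forall>x. (deriv ^^ m) (deriv f) differentiable at x)" "m < Suc n"
    show "(deriv ^^ m) f differentiable at x"
    proof (cases m)
      case 0 then show ?thesis using a by simp
    next
      case (Suc k) then show ?thesis using a * by auto
    qed
  qed
qed

lemma iter_differentiable_SucD: "iter_differentiable (Suc n) f \<Longrightarrow> iter_differentiable n f"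
  by (simp add: iter_differentiable_def)

lemma deriv_eqI: "(\<And>x. (f has_real_derivative f' x) (at x)) \<Longrightarrow> deriv f = f'"
  by (rule ext) (simp add: DERIV_imp_deriv)

lemma differentiable_imp_DERIV: "(\<forall>x. f differentiable (at x)) \<Longrightarrow> (f has_real_derivative deriv f x) (at x)"
  by (simp add: DERIV_deriv_iff_real_differentiable)

lemma iter_differentiable_const: "iter_differentiable n (\<lambda>x. c)"
proof (induction n arbitrary: c)
  case (Suc n)
  have "deriv (\<lambda>x. c) = (\<lambda>x. 0)" by (rule deriv_eqI) auto
  then show ?case using Suc by (simp add: iter_differentiable_Suc)
qed simp

lemma iter_differentiable_add: "iter_differentiable n f \<Longrightarrow> iter_differentiable n g \<Longrightarrow> iter_differentiable n (\<lambda>x. f x + g x)"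
proof (induction n arbitrary: f g)
  case (Suc n)
  then have df: "\<forall>x. f differentiable (at x)" and dg: "\<forall>x. g differentiable (at x)"
    by (auto simp: iter_differentiable_Suc)
  have "deriv (\<lambda>x. f x + g x) = (\<lambda>x. deriv f x + deriv g x)"
    by (rule deriv_eqI) (intro DERIV_add differentiable_imp_DERIV df dg)
  then show ?case using Suc df dg by (auto simp: iter_differentiable_Suc)
qed simp

lemma iter_differentiable_diff: "iter_differentiable n f \<Longrightarrow> iter_differentiable n g \<Longrightarrow> iter_differentiable n (\<lambda>x. f x - g x)"
proof (induction n arbitrary: f g)
  case (Suc n)
  then have df: "\<forall>x. f differentiable (at x)" and dg: "\<forall>x. g differentiable (at x)"
    by (auto simp: iter_differentiable_Suc)
  have "deriv (\<lambda>x. f x - g x) = (\<lambda>x. deriv f x - deriv g x)"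
    by (rule deriv_eqI) (intro DERIV_diff differentiable_imp_DERIV df dg)
  then show ?case using Suc df dg by (auto simp: iter_differentiable_Suc)
qed simp

lemma iter_differentiable_mult: "iter_differentiable n f \<Longrightarrow> iter_differentiable n g \<Longrightarrow> iter_differentiable n (\<lambda>x. f x * g x)"
proof (induction n arbitrary: f g)
  case (Suc n)
  then have df: "\<forall>x. f differentiable (at x)" and dg: "\<forall>x. g differentiable (at x)"
    by (auto simp: iter_differentiable_Suc)
  have "deriv (\<lambda>x. f x * g x) = (\<lambda>x. deriv f x * g x + f x * deriv g x)"
    by (rule deriv_eqI) (use differentiable_imp_DERIV[OF df] differentiable_imp_DERIV[OF dg] in \<open>auto intro!: derivative_eq_intros\<close>)
  moreover have "iter_differentiable n (\<lambda>x. deriv f x * g x)" "iter_differentiable n (\<lambda>x. f x * deriv g x)"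
    using Suc.prems iter_differentiable_SucD[OF Suc.prems(1)] iter_differentiable_SucD[OF Suc.prems(2)] by (auto simp: iter_differentiable_Suc intro!: Suc.IH)
  ultimately show ?case using Suc df dg
    by (auto simp: iter_differentiable_Suc intro!: iter_differentiable_add)
qed simp

lemma iter_differentiable_inverse: "iter_differentiable n f \<Longrightarrow> (\<forall>x. f x \<noteq> 0) \<Longrightarrow> iter_differentiable n (\<lambda>x. inverse (f x))"
proof (induction n arbitrary: f)
  case (Suc n)
  then have df: "\<forall>x. f differentiable (at x)" by (auto simp: iter_differentiable_Suc)
  have d: "((\<lambda>x. inverse (f x)) has_real_derivative ((- deriv f x) * (inverse (f x) * inverse (f x)))) (at x)" for x
    using DERIV_inverse_fun[OF differentiable_imp_DERIV[OF df], of x] Suc.prems(2)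
    by (simp add: divide_simps power2_eq_square)
  then have dd: "deriv (\<lambda>x. inverse (f x)) = (\<lambda>x. (- deriv f x) * (inverse (f x) * inverse (f x)))"
    by (rule deriv_eqI)
  moreover have "iter_differentiable n (\<lambda>x. inverse (f x))" using Suc by (auto dest: iter_differentiable_SucD)
  moreover have "iter_differentiable n (\<lambda>x. - deriv f x)"
    using iter_differentiable_mult[OF iter_differentiable_const[of n "-1"], of "deriv f"] Suc.prems by (auto simp: iter_differentiable_Suc)
  ultimately have "iter_differentiable n (deriv (\<lambda>x. inverse (f x)))"
    unfolding dd by (intro iter_differentiable_mult) auto
  then show ?case using d
    by (auto simp: iter_differentiable_Suc real_differentiable_def)
qed simp

lemma iter_differentiable_affine: "iter_differentiable n f \<Longrightarrow> iter_differentiable n (\<lambda>x. f (a * x + c))"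
proof (induction n arbitrary: f)
  case (Suc n)
  then have df: "\<forall>x. f differentiable (at x)" by (auto simp: iter_differentiable_Suc)
  have d: "((\<lambda>x. f (a * x + c)) has_real_derivative (a * deriv f (a * x + c))) (at x)" for x
  proof -
    have "((\<lambda>x. a * x + c) has_real_derivative a) (at x)"
      by (auto intro!: derivative_eq_intros)
    from DERIV_chain2[OF differentiable_imp_DERIV[OF df] this] show ?thesis by (simp add: mult.commute)
  qed
  then have "deriv (\<lambda>x. f (a * x + c)) = (\<lambda>x. a * deriv f (a * x + c))"
    by (rule deriv_eqI)
  moreover have "iter_differentiable n (\<lambda>x. deriv f (a * x + c))" using Suc by (auto simp: iter_differentiable_Suc)
  ultimately show ?case using d
    by (auto simp: iter_differentiable_Suc real_differentiable_def intro!: iter_differentiable_mult iter_differentiable_const)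
qed simp

text \<open>The derivatives of the flat function \<open>exp(-1/x)\<close> all have the form \<open>P(1/x) exp(-1/x)\<close>,
  extended by zero to \<open>x \<le> 0\<close>.\<close>

definition exp_inv_poly :: "real poly \<Rightarrow> real \<Rightarrow> real" where
  "exp_inv_poly P x = (if x > 0 then poly P (inverse x) * exp (- inverse x) else 0)"

definition exp_inv_poly_dpoly :: "real poly \<Rightarrow> real poly" where
  "exp_inv_poly_dpoly P = [:0, 0, 1:] * (P - pderiv P)"

lemma tendsto_poly_mult_div_exp_0: "((\<lambda>y::real. poly P y * y / exp y) \<longlongrightarrow> 0) at_top"
proof -
  have eq: "poly P y * y / exp y = (\<Sum>i\<le>degree P. coeff P i * (y ^ Suc i / exp y))" for y
  proof -
    have "poly P y * y / exp y = (\<Sum>i\<le>degree P. coeff P i * y ^ Suc i) / exp y"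
      by (simp add: poly_altdef sum_distrib_left mult_ac)
    also have "\<dots> = (\<Sum>i\<le>degree P. coeff P i * (y ^ Suc i / exp y))"
      by (subst Groups_Big.sum_divide_distrib) simp
    finally show ?thesis .
  qed
  have "((\<lambda>y. \<Sum>i\<le>degree P. coeff P i * (y ^ Suc i / exp y)) \<longlongrightarrow> (\<Sum>i\<le>degree P. coeff P i * 0)) at_top"
    by (intro tendsto_sum tendsto_mult tendsto_const tendsto_power_div_exp_0)
  then show ?thesis unfolding eq by simp
qed

lemma exp_inv_poly_DERIV: "(exp_inv_poly P has_real_derivative exp_inv_poly (exp_inv_poly_dpoly P) x) (at x)"
proof -
  consider "x > 0" | "x < 0" | "x = 0" by linarith
  then show ?thesis
  proof cases
    case 1
    have di: "(inverse has_real_derivative - (inverse x ^ 2)) (at x)"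
      using DERIV_inverse[of x] 1 by (simp add: power2_eq_square)
    have d1: "((\<lambda>x. poly P (inverse x)) has_real_derivative poly (pderiv P) (inverse x) * - (inverse x ^ 2)) (at x)"
      by (rule DERIV_chain2[OF poly_DERIV di])
    have d2: "((\<lambda>x. exp (- inverse x)) has_real_derivative exp (- inverse x) * (inverse x ^ 2)) (at x)"
      using DERIV_chain2[OF DERIV_exp DERIV_minus[OF di]] by simp
    have e: "exp_inv_poly (exp_inv_poly_dpoly P) x = (poly P (inverse x) - poly (pderiv P) (inverse x)) * (inverse x)^2 * exp (-inverse x)"
      using 1 by (simp add: exp_inv_poly_def exp_inv_poly_dpoly_def power2_eq_square)
    have "((\<lambda>x. poly P (inverse x) * exp (- inverse x)) has_real_derivative exp_inv_poly (exp_inv_poly_dpoly P) x) (at x)"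
      unfolding e using DERIV_mult[OF d1 d2] by (simp add: algebra_simps)
    then show ?thesis
      by (rule has_field_derivative_transform_within_open[where S="{0<..}"]) (use 1 in \<open>auto simp: exp_inv_poly_def\<close>)
  next
    case 2
    have "((\<lambda>x. 0) has_real_derivative exp_inv_poly (exp_inv_poly_dpoly P) x) (at x)"
      using 2 by (auto simp: exp_inv_poly_def)
    then show ?thesis
      by (rule has_field_derivative_transform_within_open[where S="{..<0}"]) (use 2 in \<open>auto simp: exp_inv_poly_def\<close>)
  next
    case 3
    have r: "((\<lambda>h. exp_inv_poly P h / h) \<longlongrightarrow> 0) (at_right 0)"
    proof -
      have "((\<lambda>y. exp_inv_poly P (inverse y) / inverse y) \<longlongrightarrow> 0) at_top"
      proof (rule Lim_transform_eventually[OF tendsto_poly_mult_div_exp_0[of P]])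
        show "\<forall>\<^sub>F y in at_top. poly P y * y / exp y = exp_inv_poly P (inverse y) / inverse y"
          using eventually_gt_at_top[of 0]
          by eventually_elim (simp add: exp_inv_poly_def exp_minus divide_inverse)
      qed
      then have "filterlim (\<lambda>x. (\<lambda>h. exp_inv_poly P h / h) (inverse x)) (nhds 0) at_top" by simp
      then show ?thesis by (rule filterlim_at_right_to_top[THEN iffD2])
    qed
    have l: "((\<lambda>h. exp_inv_poly P h / h) \<longlongrightarrow> 0) (at_left 0)"
    proof (rule Lim_transform_eventually[OF tendsto_const[of 0]])
      show "\<forall>\<^sub>F h in at_left 0. 0 = exp_inv_poly P h / h"
        unfolding eventually_at_left_field by (rule exI[of _ "-1"]) (simp add: exp_inv_poly_def)
    qed
    have "((\<lambda>h. exp_inv_poly P h / h) \<longlongrightarrow> 0) (at 0)"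
      using l r by (rule filterlim_split_at)
    then show ?thesis using 3
      by (simp add: DERIV_def exp_inv_poly_def)
  qed
qed

lemma iter_differentiable_exp_inv_poly: "iter_differentiable n (exp_inv_poly P)"
proof (induction n arbitrary: P)
  case (Suc n)
  have "deriv (exp_inv_poly P) = exp_inv_poly (exp_inv_poly_dpoly P)" by (rule deriv_eqI) (rule exp_inv_poly_DERIV)
  then show ?case using Suc exp_inv_poly_DERIV by (auto simp: iter_differentiable_Suc real_differentiable_def)
qed simp

definition exp_neg_inv :: "real \<Rightarrow> real" where "exp_neg_inv x = (if x > 0 then exp (- inverse x) else 0)"

lemma exp_neg_inv_eq: "exp_neg_inv = exp_inv_poly 1" by (auto simp: exp_neg_inv_def exp_inv_poly_def fun_eq_iff)

lemma exp_neg_inv_nonneg: "exp_neg_inv x \<ge> 0" by (simp add: exp_neg_inv_def)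
lemma exp_neg_inv_pos: "x > 0 \<Longrightarrow> exp_neg_inv x > 0" by (simp add: exp_neg_inv_def)
lemma exp_neg_inv_mono: "x \<le> y \<Longrightarrow> exp_neg_inv x \<le> exp_neg_inv y"
proof (cases "x > 0")
  case True
  assume xy: "x \<le> y"
  have "inverse y \<le> inverse x" by (rule le_imp_inverse_le) (use True xy in auto)
  then show ?thesis using True xy by (simp add: exp_neg_inv_def)
qed (auto simp: exp_neg_inv_def)

definition smooth_step :: "real \<Rightarrow> real" where "smooth_step x = exp_neg_inv x * inverse (exp_neg_inv x + exp_neg_inv (1 - x))"

lemma exp_neg_inv_sum_pos: "exp_neg_inv x + exp_neg_inv (1 - x) > 0"
proof (cases "x > 0")
  case True then show ?thesis using exp_neg_inv_pos[of x] exp_neg_inv_nonneg[of "1-x"] by linarith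
next
  case False then show ?thesis using exp_neg_inv_pos[of "1-x"] exp_neg_inv_nonneg[of x] by linarith
qed

lemma iter_differentiable_smooth_step: "iter_differentiable n smooth_step"
proof -
  have a: "iter_differentiable n exp_neg_inv" by (simp add: exp_neg_inv_eq iter_differentiable_exp_inv_poly)
  have b: "iter_differentiable n (\<lambda>x. exp_neg_inv ((-1) * x + 1))" by (rule iter_differentiable_affine[OF a])
  have "iter_differentiable n (\<lambda>x. exp_neg_inv x + exp_neg_inv ((-1) * x + 1))" by (rule iter_differentiable_add[OF a b])
  then have "iter_differentiable n (\<lambda>x. inverse (exp_neg_inv x + exp_neg_inv ((-1) * x + 1)))"
  proof (rule iter_differentiable_inverse)
    show "\<forall>x. exp_neg_inv x + exp_neg_inv (- 1 * x + 1) \<noteq> 0" using exp_neg_inv_sum_pos by (metis add.commute diff_conv_add_uminus less_irrefl mult_minus1)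
  qed
  then have "iter_differentiable n (\<lambda>x. exp_neg_inv x * inverse (exp_neg_inv x + exp_neg_inv ((-1) * x + 1)))" by (rule iter_differentiable_mult[OF a])
  then show ?thesis unfolding smooth_step_def by simp
qed

lemma smooth_step_eq_0: "x \<le> 0 \<Longrightarrow> smooth_step x = 0" by (simp add: smooth_step_def exp_neg_inv_def)
lemma smooth_step_eq_1: "x \<ge> 1 \<Longrightarrow> smooth_step x = 1"
proof -
  assume "x \<ge> 1"
  then have "exp_neg_inv (1 - x) = 0" "exp_neg_inv x > 0" by (auto simp: exp_neg_inv_def)
  then show ?thesis by (simp add: smooth_step_def)
qed

lemma smooth_step_mono: "x \<le> y \<Longrightarrow> smooth_step x \<le> smooth_step y"
proof -
  assume xy: "x \<le> y"
  have "exp_neg_inv x * exp_neg_inv (1 - y) \<le> exp_neg_inv y * exp_neg_inv (1 - x)"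
    using xy by (intro mult_mono exp_neg_inv_mono) (auto simp: exp_neg_inv_nonneg)
  then have "exp_neg_inv x * (exp_neg_inv y + exp_neg_inv (1 - y)) \<le> exp_neg_inv y * (exp_neg_inv x + exp_neg_inv (1 - x))"
    by (simp add: algebra_simps)
  then show ?thesis using exp_neg_inv_sum_pos[of x] exp_neg_inv_sum_pos[of y]
    by (simp add: smooth_step_def field_simps)
qed

lemma smooth_step_bounds: "0 \<le> smooth_step x" "smooth_step x \<le> 1"
proof -
  have p: "exp_neg_inv x + exp_neg_inv (1 - x) > 0" by (rule exp_neg_inv_sum_pos)
  show "0 \<le> smooth_step x" using p by (simp add: smooth_step_def exp_neg_inv_nonneg)
  have "exp_neg_inv x \<le> exp_neg_inv x + exp_neg_inv (1 - x)" by (simp add: exp_neg_inv_nonneg)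
  then show "smooth_step x \<le> 1" using p by (simp add: smooth_step_def divide_simps)
qed

lemma smooth_step_differentiable: "smooth_step differentiable (at x)"
  using iter_differentiable_smooth_step[of 1] by (simp add: iter_differentiable_def)

lemma smooth_step_DERIV: "(smooth_step has_real_derivative deriv smooth_step x) (at x)"
  using smooth_step_differentiable by (simp add: DERIV_deriv_iff_real_differentiable)

lemma isCont_deriv_smooth_step: "isCont (deriv smooth_step) x"
proof -
  have "\<forall>m<2. \<forall>x. (deriv ^^ m) smooth_step differentiable (at x)" using iter_differentiable_smooth_step[of 2] unfolding iter_differentiable_def .
  from this[rule_format, of 1 x] have "(deriv ^^ 1) smooth_step differentiable (at x)" by simp
  then have "deriv smooth_step differentiable (at x)" by simp
  then show ?thesis by (simp add: differentiable_imp_continuous_within)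
qed

lemma deriv_smooth_step_nonneg: "deriv smooth_step x \<ge> 0"
proof (rule ccontr)
  assume "\<not> deriv smooth_step x \<ge> 0"
  then obtain d where "d > 0" "\<forall>h>0. h < d \<longrightarrow> smooth_step x > smooth_step (x + h)"
    using DERIV_neg_dec_right[OF smooth_step_DERIV, of x] by auto
  then have "smooth_step x > smooth_step (x + d/2)" by auto
  moreover have "smooth_step x \<le> smooth_step (x + d/2)" using \<open>d > 0\<close> by (intro smooth_step_mono) auto
  ultimately show False by simp
qed

lemma deriv_smooth_step_eq_0_left: "x \<le> 0 \<Longrightarrow> deriv smooth_step x = 0"
proof -
  assume x: "x \<le> 0"
  show ?thesis
  proof (rule DERIV_local_min[OF smooth_step_DERIV, of 1])
    show "\<forall>y. \<bar>x - y\<bar> < 1 \<longrightarrow> smooth_step x \<le> smooth_step y" using x smooth_step_eq_0[OF x] smooth_step_bounds by auto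
  qed simp
qed

lemma deriv_smooth_step_eq_0_right: "x \<ge> 1 \<Longrightarrow> deriv smooth_step x = 0"
proof -
  assume x: "x \<ge> 1"
  show ?thesis
  proof (rule DERIV_local_max[OF smooth_step_DERIV, of 1])
    show "\<forall>y. \<bar>x - y\<bar> < 1 \<longrightarrow> smooth_step y \<le> smooth_step x" using x smooth_step_eq_1[OF x] smooth_step_bounds by auto
  qed simp
qed

lemma smooth_ramp_DERIV:
  "d \<noteq> 0 \<Longrightarrow> ((\<lambda>u. smooth_step ((u - c) / d)) has_real_derivative deriv smooth_step ((u - c) / d) / d) (at u)"
proof -
  assume "d \<noteq> 0"
  then have "((\<lambda>u. (u - c) / d) has_real_derivative 1 / d) (at u)"
    by (auto intro!: derivative_eq_intros)
  from DERIV_chain2[OF smooth_step_DERIV this] show ?thesis by simp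
qed

lemma deriv_smooth_ramp_eq_0:
  assumes "0 < d" "u \<notin> {c..c + d}"
  shows "deriv smooth_step ((u - c) / d) = 0"
proof (cases "u < c")
  case True
  then have "(u - c) / d \<le> 0" using assms by (simp add: divide_nonpos_pos)
  then show ?thesis by (rule deriv_smooth_step_eq_0_left)
next
  case False
  then have "1 \<le> (u - c) / d" using assms by (simp add: field_simps)
  then show ?thesis by (rule deriv_smooth_step_eq_0_right)
qed

lemma iter_differentiable_smooth_ramp: "iter_differentiable n (\<lambda>u. smooth_step ((u - c) / d))"
proof -
  have "iter_differentiable n (\<lambda>u. smooth_step ((1 / d) * u + (- c / d)))"
    by (intro iter_differentiable_affine iter_differentiable_smooth_step)
  then show ?thesis by (simp add: diff_divide_distrib)
qed

definition plateau :: "real \<Rightarrow> real \<Rightarrow> real \<Rightarrow> real \<Rightarrow> real" where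
  "plateau c\<^sub>1 c\<^sub>2 d u = smooth_step ((u - c\<^sub>1) / d) - smooth_step ((u - c\<^sub>2) / d)"

lemma plateau_DERIV:
  "d \<noteq> 0 \<Longrightarrow> (plateau c\<^sub>1 c\<^sub>2 d has_real_derivative
     deriv smooth_step ((u - c\<^sub>1) / d) / d - deriv smooth_step ((u - c\<^sub>2) / d) / d) (at u)"
  unfolding plateau_def[abs_def] by (intro DERIV_diff smooth_ramp_DERIV) simp_all

lemma abs_plateau_le_1:
  assumes "0 < d" "c\<^sub>1 \<le> c\<^sub>2"
  shows "\<bar>plateau c\<^sub>1 c\<^sub>2 d u\<bar> \<le> 1"
proof -
  have "(u - c\<^sub>2) / d \<le> (u - c\<^sub>1) / d" using assms by (simp add: divide_right_mono)
  then have "smooth_step ((u - c\<^sub>2) / d) \<le> smooth_step ((u - c\<^sub>1) / d)" by (rule smooth_step_mono)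
  then show ?thesis using smooth_step_bounds[of "(u - c\<^sub>1) / d"] smooth_step_bounds[of "(u - c\<^sub>2) / d"]
    by (simp add: plateau_def)
qed

lemma test_fun_plateau:
  assumes "0 < d" "0 < c\<^sub>1" "c\<^sub>1 \<le> c\<^sub>2" "c\<^sub>2 + d < T"
  shows "test_fun T (plateau c\<^sub>1 c\<^sub>2 d)"
proof -
  have "iter_differentiable (Suc n) (plateau c\<^sub>1 c\<^sub>2 d)" for n
    unfolding plateau_def by (intro iter_differentiable_diff iter_differentiable_smooth_ramp)
  then have smooth: "\<forall>n u. (deriv ^^ n) (plateau c\<^sub>1 c\<^sub>2 d) differentiable (at u)"
    by (auto simp: iter_differentiable_def)
  have "plateau c\<^sub>1 c\<^sub>2 d u = 0" if "u \<notin> {c\<^sub>1..c\<^sub>2 + d}" for u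
  proof (cases "u < c\<^sub>1")
    case True
    then have "(u - c\<^sub>1) / d \<le> 0" "(u - c\<^sub>2) / d \<le> 0" using assms by (simp_all add: divide_nonpos_pos)
    then show ?thesis by (simp add: plateau_def smooth_step_eq_0)
  next
    case False
    then have "1 \<le> (u - c\<^sub>1) / d" "1 \<le> (u - c\<^sub>2) / d" using that assms by (auto simp: field_simps)
    then show ?thesis by (simp add: plateau_def smooth_step_eq_1)
  qed
  then show ?thesis unfolding test_fun_def using smooth assms
    by (intro conjI exI[of _ c\<^sub>1] exI[of _ "c\<^sub>2 + d"]) auto
qed

section \<open>Increments of functions with an integrable weak derivative\<close>

lemma continuous_on_deriv_smooth_ramp:
  "d \<noteq> 0 \<Longrightarrow> continuous_on A (\<lambda>u. deriv smooth_step ((u - c) / d) / d)"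
  by (intro continuous_at_imp_continuous_on ballI continuous_intros
      isCont_o2[OF _ isCont_deriv_smooth_step]) auto

lemma set_integrable_smooth_ramp:
  fixes f :: "real \<Rightarrow> real"
  assumes "d \<noteq> 0" and "continuous_on {a..b} f"
  shows "set_integrable lborel {a..b} (\<lambda>u. deriv smooth_step ((u - c) / d) / d * f u)"
  using assms by (intro borel_integrable_atLeastAtMost' continuous_intros continuous_on_deriv_smooth_ramp)

lemma smooth_ramp_average:
  fixes f :: "real \<Rightarrow> real"
  assumes d: "0 < d" and f: "continuous_on {c..c + d} f"
    and close: "\<And>u. u \<in> {c..c + d} \<Longrightarrow> \<bar>f u - y\<bar> \<le> e"
  shows "\<bar>(LINT u:{c..c + d}|lborel. deriv smooth_step ((u - c) / d) / d * f u) - y\<bar> \<le> e"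
proof -
  define w where "w u = deriv smooth_step ((u - c) / d) / d" for u
  have w_cont: "continuous_on {c..c + d} w"
    unfolding w_def using d by (intro continuous_on_deriv_smooth_ramp) simp
  have w_nonneg: "0 \<le> w u" for u
    using d deriv_smooth_step_nonneg by (simp add: w_def)
  have int_w: "set_integrable lborel {c..c + d} w"
    by (rule borel_integrable_atLeastAtMost'[OF w_cont])
  have int_wf: "set_integrable lborel {c..c + d} (\<lambda>u. w u * (f u - y))"
    by (intro borel_integrable_atLeastAtMost' continuous_intros w_cont f)
  have "(LINT u:{c..c + d}|lborel. w u) = (\<integral>u. w u * indicator {c..c + d} u \<partial>lborel)"
    by (simp add: set_lebesgue_integral_def mult.commute)
  also have "\<dots> = smooth_step ((c + d - c) / d) - smooth_step ((c - c) / d)"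
    unfolding w_def by (intro integral_FTC_Icc_real smooth_ramp_DERIV
        continuous_intros isCont_o2[OF _ isCont_deriv_smooth_step]) (use d in auto)
  also have "\<dots> = 1" using d by (simp add: smooth_step_eq_1 smooth_step_eq_0)
  finally have total: "(LINT u:{c..c + d}|lborel. w u) = 1" .
  have int_wf': "set_integrable lborel {c..c + d} (\<lambda>u. w u * f u)"
    unfolding w_def using d f by (intro set_integrable_smooth_ramp) simp_all
  have "(LINT u:{c..c + d}|lborel. w u * (f u - y)) = (LINT u:{c..c + d}|lborel. w u * f u - y * w u)"
    by (simp add: algebra_simps)
  also have "\<dots> = (LINT u:{c..c + d}|lborel. w u * f u) - y"
    using int_w int_wf' total by (simp add: set_integrable_mult_right)
  finally have "(LINT u:{c..c + d}|lborel. w u * f u) - y = (LINT u:{c..c + d}|lborel. w u * (f u - y))"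
    by simp
  have upper: "w u * (f u - y) \<le> e * w u" and lower: "- e * w u \<le> w u * (f u - y)"
    if "u \<in> {c..c + d}" for u
    using mult_left_mono[OF close[OF that] w_nonneg[of u]]
      mult_left_mono[OF abs_ge_self[of "f u - y"] w_nonneg[of u]]
      mult_left_mono[OF abs_ge_minus_self[of "f u - y"] w_nonneg[of u]]
    by (simp_all add: mult.commute algebra_simps)
  have "(LINT u:{c..c + d}|lborel. w u * (f u - y)) \<le> (LINT u:{c..c + d}|lborel. e * w u)"
    using int_w int_wf upper by (intro set_integral_mono set_integrable_mult_right)
  moreover have "(LINT u:{c..c + d}|lborel. - e * w u) \<le> (LINT u:{c..c + d}|lborel. w u * (f u - y))"
    using int_w int_wf lower by (intro set_integral_mono set_integrable_mult_right)
  ultimately have "\<bar>(LINT u:{c..c + d}|lborel. w u * (f u - y))\<bar> \<le> e"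
    unfolding set_integral_mult_right total by simp
  then have "\<bar>(LINT u:{c..c + d}|lborel. w u * f u) - y\<bar> \<le> e"
    using \<open>(LINT u:{c..c + d}|lborel. w u * f u) - y = _\<close> by simp
  then show ?thesis unfolding w_def .
qed

lemma set_integral_mult_bounded_le:
  fixes \<eta> h :: "'a \<Rightarrow> real"
  assumes L: "0 \<le> L" and \<eta>: "\<And>x. \<bar>\<eta> x\<bar> \<le> 1"
    and h: "(\<integral>\<^sup>+ x. indicator A x * ennreal \<bar>h x\<bar> \<partial>M) \<le> ennreal L"
  shows "(LINT x:A|M. \<eta> x * h x) \<le> L"
proof (cases "integrable M (\<lambda>x. indicator A x *\<^sub>R (\<eta> x * h x))")
  case True
  have "ennreal (norm (LINT x:A|M. \<eta> x * h x)) \<le> (\<integral>\<^sup>+ x. norm (indicator A x *\<^sub>R (\<eta> x * h x)) \<partial>M)"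
    unfolding set_lebesgue_integral_def by (rule integral_norm_bound_ennreal[OF True])
  also have "\<dots> \<le> (\<integral>\<^sup>+ x. indicator A x * ennreal \<bar>h x\<bar> \<partial>M)"
  proof (rule nn_integral_mono)
    fix x
    have "\<bar>\<eta> x\<bar> * \<bar>h x\<bar> \<le> 1 * \<bar>h x\<bar>" by (intro mult_right_mono \<eta>) auto
    then show "ennreal (norm (indicator A x *\<^sub>R (\<eta> x * h x))) \<le> indicator A x * ennreal \<bar>h x\<bar>"
      by (auto simp: indicator_def abs_mult)
  qed
  also have "\<dots> \<le> ennreal L" by (rule h)
  finally have "norm (LINT x:A|M. \<eta> x * h x) \<le> L" using L by (simp add: ennreal_le_iff)
  then show ?thesis by simp
next
  case False
  then show ?thesis using L by (simp add: set_lebesgue_integral_def not_integrable_integral_eq)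
qed

lemma set_integral_deriv_plateau:
  fixes f :: "real \<Rightarrow> real"
  assumes d: "0 < d" and f: "continuous_on A f"
    and I\<^sub>1: "{c\<^sub>1..c\<^sub>1 + d} \<subseteq> A" and I\<^sub>2: "{c\<^sub>2..c\<^sub>2 + d} \<subseteq> A"
  shows "(LINT u:A|lborel. deriv (plateau c\<^sub>1 c\<^sub>2 d) u * f u)
    = (LINT u:{c\<^sub>1..c\<^sub>1 + d}|lborel. deriv smooth_step ((u - c\<^sub>1) / d) / d * f u)
      - (LINT u:{c\<^sub>2..c\<^sub>2 + d}|lborel. deriv smooth_step ((u - c\<^sub>2) / d) / d * f u)"
proof -
  define g where "g c u = deriv smooth_step ((u - c) / d) / d * f u" for c u
  have int: "set_integrable lborel {c..c + d} (g c)" if "{c..c + d} \<subseteq> A" for c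
    unfolding g_def using d continuous_on_subset[OF f that] by (intro set_integrable_smooth_ramp) auto
  have vanish: "g c u = 0" if "u \<notin> {c..c + d}" for c u
    using deriv_smooth_ramp_eq_0[OF d that] by (simp add: g_def)
  have "indicator A u *\<^sub>R (deriv (plateau c\<^sub>1 c\<^sub>2 d) u * f u)
      = indicator {c\<^sub>1..c\<^sub>1 + d} u *\<^sub>R g c\<^sub>1 u - indicator {c\<^sub>2..c\<^sub>2 + d} u *\<^sub>R g c\<^sub>2 u" for u
  proof -
    have "deriv (plateau c\<^sub>1 c\<^sub>2 d) u * f u = g c\<^sub>1 u - g c\<^sub>2 u"
      unfolding g_def using d by (simp add: DERIV_imp_deriv[OF plateau_DERIV] left_diff_distrib)
    then show ?thesis using I\<^sub>1 I\<^sub>2 vanish[of u c\<^sub>1] vanish[of u c\<^sub>2] by (auto simp: indicator_def)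
  qed
  then show ?thesis
    using int[OF I\<^sub>1] int[OF I\<^sub>2] by (simp add: set_lebesgue_integral_def set_integrable_def g_def)
qed

lemma plateau_ramp_averages_le:
  fixes f h :: "real \<Rightarrow> real"
  assumes f: "continuous_on {0..T} f" and L: "0 \<le> L"
    and weak: "\<And>\<eta>. test_fun T \<eta> \<Longrightarrow>
       - (LINT u:{0<..<T}|lborel. deriv \<eta> u * f u) = (LINT u:{0<..<T}|lborel. \<eta> u * h u)"
    and h: "(\<integral>\<^sup>+ u. indicator {0<..<T} u * ennreal \<bar>h u\<bar> \<partial>lborel) \<le> ennreal L"
    and d: "0 < d" and c: "0 < c\<^sub>1" "c\<^sub>1 + d \<le> c\<^sub>2" "c\<^sub>2 + d < T"
  shows "(LINT u:{c\<^sub>2..c\<^sub>2 + d}|lborel. deriv smooth_step ((u - c\<^sub>2) / d) / d * f u)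
    - (LINT u:{c\<^sub>1..c\<^sub>1 + d}|lborel. deriv smooth_step ((u - c\<^sub>1) / d) / d * f u) \<le> L"
proof -
  have "continuous_on {0<..<T} f" by (rule continuous_on_subset[OF f]) auto
  moreover have "{c\<^sub>1..c\<^sub>1 + d} \<subseteq> {0<..<T}" "{c\<^sub>2..c\<^sub>2 + d} \<subseteq> {0<..<T}" using d c by auto
  ultimately have "(LINT u:{0<..<T}|lborel. deriv (plateau c\<^sub>1 c\<^sub>2 d) u * f u)
      = (LINT u:{c\<^sub>1..c\<^sub>1 + d}|lborel. deriv smooth_step ((u - c\<^sub>1) / d) / d * f u)
        - (LINT u:{c\<^sub>2..c\<^sub>2 + d}|lborel. deriv smooth_step ((u - c\<^sub>2) / d) / d * f u)"
    using d by (intro set_integral_deriv_plateau)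
  moreover have "(LINT u:{0<..<T}|lborel. plateau c\<^sub>1 c\<^sub>2 d u * h u) \<le> L"
    using d c by (intro set_integral_mult_bounded_le L h abs_plateau_le_1) auto
  moreover have "test_fun T (plateau c\<^sub>1 c\<^sub>2 d)"
    using d c by (intro test_fun_plateau) auto
  ultimately show ?thesis using weak[of "plateau c\<^sub>1 c\<^sub>2 d"] by linarith
qed

text \<open>Test with a plateau rising just after \<open>s\<close> and falling just before \<open>t\<close>: the two ramps
  average \<open>f\<close> near \<open>s\<close> and near \<open>t\<close>, and continuity lets the ramps shrink to the endpoints.\<close>

lemma weak_derivative_increment_le:
  fixes f h :: "real \<Rightarrow> real"
  assumes f: "continuous_on {0..T} f" and L: "0 \<le> L"
    and weak: "\<And>\<eta>. test_fun T \<eta> \<Longrightarrow>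
       - (LINT u:{0<..<T}|lborel. deriv \<eta> u * f u) = (LINT u:{0<..<T}|lborel. \<eta> u * h u)"
    and h: "(\<integral>\<^sup>+ u. indicator {0<..<T} u * ennreal \<bar>h u\<bar> \<partial>lborel) \<le> ennreal L"
    and st: "0 \<le> s" "s \<le> t" "t \<le> T"
  shows "f t - f s \<le> L"
proof (cases "s = t")
  case True
  then show ?thesis using L by simp
next
  case False
  with st have "s < t" by simp
  show ?thesis
  proof (rule field_le_epsilon)
    fix e :: real assume "0 < e"
    obtain \<delta>s where \<delta>s: "0 < \<delta>s" "\<forall>u\<in>{0..T}. \<bar>u - s\<bar> < \<delta>s \<longrightarrow> \<bar>f u - f s\<bar> < e / 2"
      using continuous_on_iff[THEN iffD1, OF f, rule_format, of s "e / 2"] st \<open>0 < e\<close>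
      unfolding dist_real_def by auto
    obtain \<delta>t where \<delta>t: "0 < \<delta>t" "\<forall>u\<in>{0..T}. \<bar>u - t\<bar> < \<delta>t \<longrightarrow> \<bar>f u - f t\<bar> < e / 2"
      using continuous_on_iff[THEN iffD1, OF f, rule_format, of t "e / 2"] st \<open>0 < e\<close>
      unfolding dist_real_def by auto
    define m where "m = min (min \<delta>s \<delta>t) (t - s)"
    have m: "0 < m" "m \<le> \<delta>s" "m \<le> \<delta>t" "m \<le> t - s"
      using \<delta>s(1) \<delta>t(1) \<open>s < t\<close> by (auto simp: m_def)
    define d where "d = m / 4"
    have d: "0 < d" "2 * d < \<delta>s" "2 * d < \<delta>t" "4 * d \<le> t - s"
      using m unfolding d_def by linarith+
    have "\<bar>(LINT u:{s + d..s + d + d}|lborel. deriv smooth_step ((u - (s + d)) / d) / d * f u) - f s\<bar> \<le> e / 2"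
      using d(1) proof (rule smooth_ramp_average)
      show "continuous_on {s + d..s + d + d} f" using d st by (intro continuous_on_subset[OF f]) auto
      show "\<bar>f u - f s\<bar> \<le> e / 2" if "u \<in> {s + d..s + d + d}" for u
        using that d st \<delta>s(2) by (auto intro: less_imp_le)
    qed
    moreover have "\<bar>(LINT u:{t - 2 * d..t - 2 * d + d}|lborel. deriv smooth_step ((u - (t - 2 * d)) / d) / d * f u)
        - f t\<bar> \<le> e / 2"
      using d(1) proof (rule smooth_ramp_average)
      show "continuous_on {t - 2 * d..t - 2 * d + d} f" using d st by (intro continuous_on_subset[OF f]) auto
      show "\<bar>f u - f t\<bar> \<le> e / 2" if "u \<in> {t - 2 * d..t - 2 * d + d}" for u
        using that d st \<delta>t(2) by (auto intro: less_imp_le)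
    qed
    moreover have "(LINT u:{t - 2 * d..t - 2 * d + d}|lborel. deriv smooth_step ((u - (t - 2 * d)) / d) / d * f u)
        - (LINT u:{s + d..s + d + d}|lborel. deriv smooth_step ((u - (s + d)) / d) / d * f u) \<le> L"
      using d st by (intro plateau_ramp_averages_le[OF f L weak h]) auto
    ultimately show "f t - f s \<le> L + e" unfolding abs_le_iff by linarith
  qed
qed

section \<open>Truncated moments\<close>

lemma has_real_derivative_glue:
  fixes f g h :: "real \<Rightarrow> real"
  assumes g: "(g has_real_derivative D) (at c)" and h: "(h has_real_derivative D) (at c)"
    and fg: "\<And>x. c - 1 < x \<Longrightarrow> x \<le> c \<Longrightarrow> f x = g x" and fh: "\<And>x. x \<ge> c \<Longrightarrow> x < c + 1 \<Longrightarrow> f x = h x"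
  shows "(f has_real_derivative D) (at c)"
proof -
  have gl: "((\<lambda>t. (g (c + t) - g c) / t) \<longlongrightarrow> D) (at 0)" using g by (simp add: DERIV_def)
  have hl: "((\<lambda>t. (h (c + t) - h c) / t) \<longlongrightarrow> D) (at 0)" using h by (simp add: DERIV_def)
  have l: "((\<lambda>t. (f (c + t) - f c) / t) \<longlongrightarrow> D) (at_left 0)"
  proof (rule Lim_transform_eventually[OF tendsto_mono[OF at_le[of _ UNIV] gl[unfolded at_left_eq[symmetric]]]])
    show "\<forall>\<^sub>F t in at_left 0. (g (c + t) - g c) / t = (f (c + t) - f c) / t"
      unfolding eventually_at_left_field by (rule exI[of _ "-1"]) (auto simp: fg)
  qed simp
  have r: "((\<lambda>t. (f (c + t) - f c) / t) \<longlongrightarrow> D) (at_right 0)"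
  proof (rule Lim_transform_eventually[OF tendsto_mono[OF at_le[of _ UNIV] hl]])
    show "\<forall>\<^sub>F t in at_right 0. (h (c + t) - h c) / t = (f (c + t) - f c) / t"
      unfolding eventually_at_right_field by (rule exI[of _ "1"]) (auto simp: fh)
  qed simp
  have "((\<lambda>t. (f (c + t) - f c) / t) \<longlongrightarrow> D) (at 0)" using l r by (rule filterlim_split_at)
  then show ?thesis by (simp add: DERIV_def)
qed

definition soft_cap :: "real \<Rightarrow> real" where
  "soft_cap u = (if u \<le> 1 then u else if u \<le> 2 then u - (u - 1)^2 / 2 else 3/2)"

definition soft_cap' :: "real \<Rightarrow> real" where
  "soft_cap' u = min 1 (max 0 (2 - u))"

lemma soft_cap'_cases: "soft_cap' u = (if u \<le> 1 then 1 else if u \<le> 2 then 2 - u else 0)"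
  by (auto simp: soft_cap'_def)

lemma soft_cap_DERIV: "(soft_cap has_real_derivative soft_cap' u) (at u)"
proof -
  have d1: "((\<lambda>u. u) has_real_derivative 1) (at u)" for u by (rule DERIV_ident)
  have d2: "((\<lambda>u. u - (u - 1)^2 / 2) has_real_derivative (2 - u)) (at u)" for u
    by (auto intro!: derivative_eq_intros simp: field_simps)
  have d3: "((\<lambda>u. 3/2) has_real_derivative 0) (at u)" for u by simp
  consider "u < 1" | "u = 1" | "1 < u \<and> u < 2" | "u = 2" | "u > 2" by linarith
  then show ?thesis
  proof cases
    case 1
    have "(soft_cap has_real_derivative 1) (at u)"
      by (rule has_field_derivative_transform_within_open[OF d1[of u], where S="{..<1}"])
         (use 1 in \<open>auto simp: soft_cap_def soft_cap'_cases\<close>)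
    then show ?thesis using 1 by (simp add: soft_cap'_cases)
  next
    case 2
    have "(soft_cap has_real_derivative 1) (at 1)"
      by (rule has_real_derivative_glue[OF d1 d2[of 1, simplified]]) (auto simp: soft_cap_def soft_cap'_cases)
    then show ?thesis using 2 by (simp add: soft_cap'_cases)
  next
    case 3
    have "(soft_cap has_real_derivative (2 - u)) (at u)"
      by (rule has_field_derivative_transform_within_open[OF d2[of u], where S="{1<..<2}"])
         (use 3 in \<open>auto simp: soft_cap_def soft_cap'_cases\<close>)
    then show ?thesis using 3 by (simp add: soft_cap'_cases)
  next
    case 4
    have "(soft_cap has_real_derivative 0) (at 2)"
      by (rule has_real_derivative_glue[OF d2[of 2, simplified] d3]) (auto simp: soft_cap_def power2_eq_square)
    then show ?thesis unfolding 4 by (simp add: soft_cap'_cases)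
  next
    case 5
    have "(soft_cap has_real_derivative 0) (at u)"
      by (rule has_field_derivative_transform_within_open[OF d3[of u], where S="{2<..}"])
         (use 5 in \<open>auto simp: soft_cap_def soft_cap'_cases\<close>)
    then show ?thesis using 5 by (simp add: soft_cap'_cases)
  qed
qed

lemma continuous_on_soft_cap': "continuous_on UNIV soft_cap'"
  unfolding soft_cap'_def by (intro continuous_intros)

lemma soft_cap'_bounds: "0 \<le> soft_cap' u" "soft_cap' u \<le> 1"
  by (auto simp: soft_cap'_def)

lemma soft_cap_nonneg: "0 \<le> u \<Longrightarrow> 0 \<le> soft_cap u"
proof -
  assume u: "0 \<le> u"
  have "(u - 1)^2 \<le> 1" if "1 < u" "u \<le> 2"
    using that by (intro power_le_one) auto
  then show ?thesis using u by (auto simp: soft_cap_def)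
qed

lemma soft_cap_le_self: "soft_cap u \<le> u"
  by (auto simp: soft_cap_def)

lemma soft_cap_le: "soft_cap u \<le> 3/2"
proof -
  have "u - (u - 1)^2 / 2 \<le> 3/2" for u :: real
  proof -
    have e: "u - (u - 1)^2 / 2 = 3/2 - (u - 2)^2 / 2" by (simp add: power2_eq_square field_simps)
    have "0 \<le> (u - 2)^2" by simp
    then show ?thesis unfolding e by simp
  qed
  then show ?thesis by (auto simp: soft_cap_def)
qed

lemma soft_cap_eq_const: "u \<ge> 2 \<Longrightarrow> soft_cap u = 3/2"
  by (auto simp: soft_cap_def power2_eq_square)

lemma soft_cap_eq_self: "u \<le> 1 \<Longrightarrow> soft_cap u = u"
  by (auto simp: soft_cap_def)

lemma soft_cap'_mult_le: "0 \<le> u \<Longrightarrow> soft_cap' u * u \<le> 2 * soft_cap u"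
proof -
  assume u: "0 \<le> u"
  consider "u \<le> 1" | "1 < u \<and> u \<le> 2" | "2 < u" by linarith
  then show ?thesis
  proof cases
    case 1 then show ?thesis using u by (simp add: soft_cap_def soft_cap'_cases)
  next
    case 2
    have "(2 - u) * u \<le> 2 * (u - (u - 1)^2 / 2)"
      using 2 by (simp add: power2_eq_square algebra_simps)
    then show ?thesis using 2 by (simp add: soft_cap_def soft_cap'_cases)
  next
    case 3 then show ?thesis by (simp add: soft_cap_def soft_cap'_cases)
  qed
qed

lemma young_powr:
  fixes w c d p :: real
  assumes w: "0 \<le> w" and c: "0 \<le> c" and d: "0 < d" and p: "1 \<le> p"
  shows "w powr (p - 1) * c \<le> d * w powr p + d powr (1 - p) * c powr p"
proof (cases "c \<le> d * w")
  case True
  have "w powr (p - 1) * c \<le> w powr (p - 1) * (d * w)"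
    using True by (intro mult_left_mono) auto
  also have "\<dots> \<le> d * w powr p"
  proof (cases "w = 0")
    case True then show ?thesis by simp
  next
    case False
    then have "w powr (p - 1) * w = w powr p" using w powr_mult_base[of w "p - 1"] by (simp add: mult.commute)
    then show ?thesis by (simp add: algebra_simps)
  qed
  also have "\<dots> \<le> d * w powr p + d powr (1 - p) * c powr p" by simp
  finally show ?thesis .
next
  case False
  then have cp: "c > 0" and wc: "w \<le> c / d" using d w
    by (auto simp: field_simps) (smt (verit) mult_nonneg_nonneg)
  have "w powr (p - 1) * c \<le> (c / d) powr (p - 1) * c"
    using wc w p c by (intro mult_right_mono powr_mono2) auto
  also have "(c / d) powr (p - 1) * c = d powr (1 - p) * c powr p"
  proof -
    have eq1: "(c / d) powr (p - 1) = c powr (p - 1) / d powr (p - 1)"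
      using cp d by (simp add: powr_divide)
    moreover have "c powr (p - 1) * c = c powr p" using cp powr_mult_base[of c "p - 1"] by (simp add: mult.commute)
    moreover have "1 / d powr (p - 1) = d powr (1 - p)"
      using d by (simp add: powr_minus_divide[symmetric] powr_minus)
    ultimately have "(c / d) powr (p - 1) * c = (c powr (p - 1) * c) * (1 / d powr (p - 1))"
      by (simp only: eq1) (simp add: divide_inverse mult_ac)
    also have "\<dots> = c powr p * d powr (1 - p)"
      by (simp only: \<open>c powr (p - 1) * c = c powr p\<close> \<open>1 / d powr (p - 1) = d powr (1 - p)\<close>)
    finally show ?thesis by simp
  qed
  also have "\<dots> \<le> d * w powr p + d powr (1 - p) * c powr p" using d w by simp
  finally show ?thesis .
qed

definition bracket_pow :: "real \<Rightarrow> 'a::euclidean_space \<Rightarrow> real" where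
  "bracket_pow p x = (1 + x \<bullet> x) powr (p / 2)"

definition bracket_pow_grad :: "real \<Rightarrow> 'a::euclidean_space \<Rightarrow> 'a" where
  "bracket_pow_grad p x = (p * (1 + x \<bullet> x) powr (p / 2 - 1)) *\<^sub>R x"

lemma one_plus_inner_pos: "0 < 1 + x \<bullet> (x::'a::euclidean_space)"
  using inner_ge_zero[of x] by linarith

lemma one_plus_inner_ne_0 [simp]: "1 + x \<bullet> (x::'a::euclidean_space) \<noteq> 0"
  using one_plus_inner_pos[of x] by linarith

lemma bracket_pow_has_derivative: "(bracket_pow p has_derivative (\<lambda>h. bracket_pow_grad p x \<bullet> h)) (at x)"
proof -
  have pos: "0 < 1 + x \<bullet> x" by (rule one_plus_inner_pos)
  have "(bracket_pow p has_derivative (\<lambda>h. (1 + x \<bullet> x) powr (p / 2) * ((h \<bullet> x + x \<bullet> h) * (p / 2) / (1 + x \<bullet> x)))) (at x)"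
    unfolding bracket_pow_def using pos by (auto intro!: derivative_eq_intros)
  moreover have "(\<lambda>h. (1 + x \<bullet> x) powr (p / 2) * ((h \<bullet> x + x \<bullet> h) * (p / 2) / (1 + x \<bullet> x))) = (\<lambda>h. bracket_pow_grad p x \<bullet> h)"
  proof
    fix h
    obtain A where A: "A = (1 + x \<bullet> x) powr (p / 2 - 1)" by blast
    have e: "(1 + x \<bullet> x) powr (p / 2) = A * (1 + x \<bullet> x)"
      using pos unfolding A powr_add[symmetric, of "1 + x \<bullet> x" "p/2 - 1" 1, simplified] by simp
    have g: "bracket_pow_grad p x = (p * A) *\<^sub>R x" by (simp add: bracket_pow_grad_def A)
    show "(1 + x \<bullet> x) powr (p / 2) * ((h \<bullet> x + x \<bullet> h) * (p / 2) / (1 + x \<bullet> x)) = bracket_pow_grad p x \<bullet> h"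
      unfolding e g using pos by (simp add: inner_commute field_simps)
  qed
  ultimately show ?thesis by simp
qed

lemma continuous_on_bracket_pow: "continuous_on UNIV (bracket_pow p)"
  unfolding bracket_pow_def using one_plus_inner_pos
  by (intro continuous_intros) auto

lemma continuous_on_bracket_pow_grad: "continuous_on UNIV (bracket_pow_grad p)"
  unfolding bracket_pow_grad_def using one_plus_inner_pos
  by (intro continuous_intros) auto

lemma bracket_pow_ge_1: "p \<ge> 0 \<Longrightarrow> 1 \<le> bracket_pow p x"
  unfolding bracket_pow_def using inner_ge_zero[of x] by (intro ge_one_powr_ge_zero) auto

lemma norm_le_bracket_pow: "p \<ge> 1 \<Longrightarrow> norm x \<le> bracket_pow p x"
proof -
  assume p: "p \<ge> 1"
  have "norm x = sqrt (x \<bullet> x)" by (simp add: norm_eq_sqrt_inner)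
  also have "\<dots> \<le> sqrt (1 + x \<bullet> x)" by simp
  also have "\<dots> = (1 + x \<bullet> x) powr (1/2)" using one_plus_inner_pos[of x] by (simp add: powr_half_sqrt)
  also have "\<dots> \<le> (1 + x \<bullet> x) powr (p/2)" using p inner_ge_zero[of x] by (intro powr_mono) auto
  finally show ?thesis by (simp add: bracket_pow_def)
qed

lemma norm_powr_le_bracket_pow: "p \<ge> 1 \<Longrightarrow> norm x powr p \<le> bracket_pow p x"
proof -
  assume p: "p \<ge> 1"
  have "norm x powr p = (norm x ^ 2) powr (p / 2)"
  proof (cases "norm x = 0")
    case False
    have a: "norm x powr 2 = norm x ^ 2" by (rule powr_numeral) (use False in simp)
    have "(norm x ^ 2) powr (p/2) = (norm x powr 2) powr (p/2)" by (simp only: a)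
    also have "\<dots> = norm x powr (2 * (p/2))" by (rule powr_powr)
    also have "2 * (p/2) = p" by simp
    finally show ?thesis by simp
  qed simp
  also have "\<dots> \<le> (1 + x \<bullet> x) powr (p / 2)"
    using p by (intro powr_mono2) (auto simp: power2_norm_eq_inner)
  finally show ?thesis by (simp add: bracket_pow_def)
qed

lemma bracket_pow_le: "p \<ge> 1 \<Longrightarrow> bracket_pow p x \<le> 2 powr (p / 2) * (1 + norm x powr p)"
proof -
  assume p: "p \<ge> 1"
  have "1 + x \<bullet> x \<le> 2 * max 1 (x \<bullet> x)" by auto
  then have "bracket_pow p x \<le> (2 * max 1 (x \<bullet> x)) powr (p / 2)"
    unfolding bracket_pow_def using p one_plus_inner_pos[of x] by (intro powr_mono2) auto
  also have "\<dots> = 2 powr (p / 2) * max 1 (x \<bullet> x) powr (p / 2)"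
    by (simp add: powr_mult)
  also have "max 1 (x \<bullet> x) powr (p / 2) \<le> 1 + norm x powr p"
  proof (cases "x \<bullet> x \<le> 1")
    case True then show ?thesis by simp
  next
    case False
    have "(x \<bullet> x) powr (p / 2) = norm x powr p"
    proof (cases "norm x = 0")
      case False
      have a: "norm x powr 2 = norm x ^ 2" by (rule powr_numeral) (use False in simp)
      have "(norm x ^ 2) powr (p/2) = (norm x powr 2) powr (p/2)" by (simp only: a)
      also have "\<dots> = norm x powr (2 * (p/2))" by (rule powr_powr)
      also have "2 * (p/2) = p" by simp
      finally show ?thesis by (simp add: power2_norm_eq_inner)
    qed simp
    then show ?thesis using False by simp
  qed
  then have "2 powr (p / 2) * max 1 (x \<bullet> x) powr (p / 2) \<le> 2 powr (p / 2) * (1 + norm x powr p)"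
    by (intro mult_left_mono) auto
  finally show ?thesis .
qed

lemma norm_bracket_pow_grad_le: "p \<ge> 1 \<Longrightarrow> norm (bracket_pow_grad p x) \<le> p * ((1 + x \<bullet> x) powr (1/2)) powr (p - 1)"
proof -
  assume p: "p \<ge> 1"
  have pos: "0 < 1 + x \<bullet> x" by (rule one_plus_inner_pos)
  have "norm (bracket_pow_grad p x) = p * (1 + x \<bullet> x) powr (p / 2 - 1) * norm x"
    using p by (simp add: bracket_pow_grad_def abs_mult)
  also have "p * (1 + x \<bullet> x) powr (p / 2 - 1) * norm x \<le> p * (1 + x \<bullet> x) powr (p / 2 - 1) * (1 + x \<bullet> x) powr (1/2)"
    using p norm_le_bracket_pow[of 1 x] by (intro mult_left_mono) (auto simp: bracket_pow_def)
  also have "p * (1 + x \<bullet> x) powr (p / 2 - 1) * (1 + x \<bullet> x) powr (1/2) = p * ((1 + x \<bullet> x) powr (1/2)) powr (p - 1)"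
    using pos by (simp add: powr_powr powr_add[symmetric] field_simps)
  finally show ?thesis .
qed

lemma bracket_pow_powr: "bracket_pow p x = ((1 + x \<bullet> x) powr (1/2)) powr p"
  by (simp add: bracket_pow_def powr_powr)

definition capped_bracket_pow :: "real \<Rightarrow> real \<Rightarrow> 'a::euclidean_space \<Rightarrow> real" where
  "capped_bracket_pow p R x = R * soft_cap (bracket_pow p x / R)"

definition capped_bracket_pow_grad :: "real \<Rightarrow> real \<Rightarrow> 'a::euclidean_space \<Rightarrow> 'a" where
  "capped_bracket_pow_grad p R x = soft_cap' (bracket_pow p x / R) *\<^sub>R bracket_pow_grad p x"

lemma capped_bracket_pow_has_derivative: "R > 0 \<Longrightarrow> (capped_bracket_pow p R has_derivative (\<lambda>h. capped_bracket_pow_grad p R x \<bullet> h)) (at x)"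
proof -
  assume R: "R > 0"
  have t: "(soft_cap has_derivative (\<lambda>h. soft_cap' (bracket_pow p x / R) * h)) (at (bracket_pow p x / R))"
    using soft_cap_DERIV[of "bracket_pow p x / R"] by (simp add: has_field_derivative_def)
  have g: "((\<lambda>x. bracket_pow p x / R) has_derivative (\<lambda>h. (bracket_pow_grad p x \<bullet> h) / R)) (at x)"
    using bracket_pow_has_derivative[of p x] R by (auto intro!: derivative_eq_intros)
  have "((\<lambda>x. R * soft_cap (bracket_pow p x / R)) has_derivative (\<lambda>h. R * (soft_cap' (bracket_pow p x / R) * ((bracket_pow_grad p x \<bullet> h) / R)))) (at x)"
    using has_derivative_compose[OF g t] R by (auto intro!: derivative_eq_intros)
  moreover have "(\<lambda>h. R * (soft_cap' (bracket_pow p x / R) * ((bracket_pow_grad p x \<bullet> h) / R))) = (\<lambda>h. capped_bracket_pow_grad p R x \<bullet> h)"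
    using R by (auto simp: capped_bracket_pow_grad_def fun_eq_iff)
  ultimately have fin: "((\<lambda>x. R * soft_cap (bracket_pow p x / R)) has_derivative (\<lambda>h. capped_bracket_pow_grad p R x \<bullet> h)) (at x)"
    by metis
  show ?thesis unfolding capped_bracket_pow_def[abs_def] by (rule fin)
qed

lemma continuous_on_capped_bracket_pow: "R > 0 \<Longrightarrow> continuous_on UNIV (capped_bracket_pow p R)"
proof -
  assume R: "R > 0"
  have "continuous_on UNIV (\<lambda>x. bracket_pow p x / R)" using R by (intro continuous_intros continuous_on_bracket_pow) auto
  moreover have "continuous_on UNIV soft_cap"
  proof (rule differentiable_imp_continuous_on)
    show "soft_cap differentiable_on UNIV"
      unfolding differentiable_on_def real_differentiable_def using soft_cap_DERIV
      by (metis has_field_derivative_at_within)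
  qed
  ultimately show ?thesis unfolding capped_bracket_pow_def
    by (intro continuous_intros) (auto intro: continuous_on_compose2[of UNIV soft_cap])
qed

lemma continuous_on_capped_bracket_pow_grad: "R > 0 \<Longrightarrow> continuous_on UNIV (capped_bracket_pow_grad p R)"
  unfolding capped_bracket_pow_grad_def
  by (intro continuous_intros continuous_on_bracket_pow_grad continuous_on_compose2[OF continuous_on_soft_cap'] continuous_on_bracket_pow) auto

lemma capped_bracket_pow_nonneg: "R > 0 \<Longrightarrow> 0 \<le> capped_bracket_pow p R x"
  unfolding capped_bracket_pow_def by (intro mult_nonneg_nonneg soft_cap_nonneg) (auto simp: bracket_pow_def)

lemma capped_bracket_pow_le: "R > 0 \<Longrightarrow> capped_bracket_pow p R x \<le> 3/2 * R"
  unfolding capped_bracket_pow_def using soft_cap_le[of "bracket_pow p x / R"] by (simp add: mult.commute)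

lemma capped_bracket_pow_le_bracket_pow: "R > 0 \<Longrightarrow> capped_bracket_pow p R x \<le> bracket_pow p x"
  unfolding capped_bracket_pow_def using soft_cap_le_self[of "bracket_pow p x / R"] by (simp add: field_simps)

lemma capped_bracket_pow_eq_bracket_pow: "R > 0 \<Longrightarrow> bracket_pow p x \<le> R \<Longrightarrow> capped_bracket_pow p R x = bracket_pow p x"
  unfolding capped_bracket_pow_def by (simp add: soft_cap_eq_self)

lemma C1c_grad_capped_bracket_pow: "R > 0 \<Longrightarrow> p \<ge> 1 \<Longrightarrow> C1c_grad (\<lambda>x. capped_bracket_pow p R x - 3/2 * R) (capped_bracket_pow_grad p R)"
proof -
  assume R: "R > 0" and p: "p \<ge> 1"
  have d: "((\<lambda>x. capped_bracket_pow p R x - 3/2 * R) has_derivative (\<lambda>h. capped_bracket_pow_grad p R x \<bullet> h)) (at x)" for x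
    using capped_bracket_pow_has_derivative[OF R, of p x] by (auto intro!: derivative_eq_intros)
  have sub: "{x. capped_bracket_pow p R x - 3/2 * R \<noteq> 0} \<subseteq> cball 0 (2 * R)"
  proof
    fix x assume "x \<in> {x. capped_bracket_pow p R x - 3/2 * R \<noteq> 0}"
    then have "bracket_pow p x / R < 2" using soft_cap_eq_const[of "bracket_pow p x / R"] R by (force simp: capped_bracket_pow_def)
    then have "bracket_pow p x < 2 * R" using R by (simp add: field_simps)
    then show "x \<in> cball 0 (2 * R)" using norm_le_bracket_pow[OF p, of x] by simp
  qed
  have "bounded {x. capped_bracket_pow p R x - 3/2 * R \<noteq> 0}" by (rule bounded_subset[OF bounded_cball sub])
  then have "compact (closure {x. capped_bracket_pow p R x - 3/2 * R \<noteq> 0})" by (simp add: compact_closure)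
  then show ?thesis unfolding C1c_grad_def using d continuous_on_capped_bracket_pow_grad[OF R] by auto
qed

lemma inner_capped_bracket_pow_grad_le:
  assumes R: "R > 0" and p: "p \<ge> 1" and d: "d > 0"
  shows "\<bar>capped_bracket_pow_grad p R x \<bullet> v\<bar> \<le> 2 * p * d * capped_bracket_pow p R x + p * d powr (1 - p) * norm v powr p"
proof -
  define w where "w = (1 + x \<bullet> x) powr (1/2)"
  define u where "u = bracket_pow p x / R"
  have w0: "0 \<le> w" by (simp add: w_def)
  have u0: "0 \<le> u" using bracket_pow_ge_1[of p x] p R by (simp add: u_def)
  have t: "0 \<le> soft_cap' u" "soft_cap' u \<le> 1" by (rule soft_cap'_bounds)+
  have "\<bar>capped_bracket_pow_grad p R x \<bullet> v\<bar> \<le> norm (capped_bracket_pow_grad p R x) * norm v" by (rule Cauchy_Schwarz_ineq2)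
  also have "norm (capped_bracket_pow_grad p R x) = soft_cap' u * norm (bracket_pow_grad p x)"
    using t by (simp add: capped_bracket_pow_grad_def u_def)
  also have "soft_cap' u * norm (bracket_pow_grad p x) * norm v \<le> soft_cap' u * (p * w powr (p - 1)) * norm v"
    using t norm_bracket_pow_grad_le[OF p, of x] by (intro mult_right_mono mult_left_mono) (auto simp: w_def)
  also have "\<dots> = soft_cap' u * p * (w powr (p - 1) * norm v)" by (simp add: mult_ac)
  also have "\<dots> \<le> soft_cap' u * p * (d * w powr p + d powr (1 - p) * norm v powr p)"
    using t p by (intro mult_left_mono young_powr w0 d) auto
  also have "\<dots> = p * d * (soft_cap' u * bracket_pow p x) + soft_cap' u * (p * d powr (1 - p) * norm v powr p)"
    by (simp add: bracket_pow_powr w_def algebra_simps)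
  also have "\<dots> \<le> p * d * (2 * capped_bracket_pow p R x) + 1 * (p * d powr (1 - p) * norm v powr p)"
  proof (intro add_mono mult_left_mono mult_right_mono)
    have "soft_cap' u * bracket_pow p x = R * (soft_cap' u * u)" using R by (simp add: u_def)
    also have "\<dots> \<le> R * (2 * soft_cap u)" using R soft_cap'_mult_le[OF u0] by (intro mult_left_mono) auto
    finally show "soft_cap' u * bracket_pow p x \<le> 2 * capped_bracket_pow p R x" by (simp add: capped_bracket_pow_def u_def)
  qed (use t p d in auto)
  finally show ?thesis by (simp add: algebra_simps)
qed

definition arctan_cap :: "real \<Rightarrow> real \<Rightarrow> real" where
  "arctan_cap a s = a * arctan (s / a)"

definition arctan_cap' :: "real \<Rightarrow> real \<Rightarrow> real" where
  "arctan_cap' a s = 1 / (1 + (s / a)\<^sup>2)"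

lemma arctan_cap_DERIV: "0 < a \<Longrightarrow> (arctan_cap a has_real_derivative arctan_cap' a s) (at s)"
proof -
  assume "0 < a"
  have "((\<lambda>s. a * arctan (s / a)) has_real_derivative a * (inverse (1 + (s / a)\<^sup>2) * (1 / a))) (at s)"
    by (auto intro!: derivative_eq_intros)
  moreover have "a * (inverse (1 + (s / a)\<^sup>2) * (1 / a)) = arctan_cap' a s"
    using \<open>0 < a\<close> by (simp add: arctan_cap'_def divide_inverse)
  ultimately show ?thesis by (simp add: arctan_cap_def[abs_def])
qed

lemma arctan_cap'_bounds: "0 < arctan_cap' a s" "arctan_cap' a s \<le> 1"
  by (simp_all add: arctan_cap'_def add_pos_nonneg)

lemma arctan_cap'_mult_le:
  assumes "0 < a" "0 \<le> s"
  shows "arctan_cap' a s * s \<le> a / 2"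
proof -
  define u where "u = s / a"
  have "2 * u \<le> 1 + u\<^sup>2" using sum_squares_bound[of 1 u] by (simp add: power2_eq_square)
  then have "u / (1 + u\<^sup>2) \<le> 1 / 2" by (simp add: field_simps add_pos_nonneg)
  moreover have "arctan_cap' a s * s = a * (u / (1 + u\<^sup>2))"
    using assms by (simp add: arctan_cap'_def u_def)
  ultimately show ?thesis using assms mult_left_mono[of "u / (1 + u\<^sup>2)" "1 / 2" a] by simp
qed

lemma abs_arctan_le: "\<bar>arctan x\<bar> \<le> pi / 2"
  unfolding abs_le_iff using arctan_bounded[of x] by linarith

lemma abs_arctan_cap_le: "0 < a \<Longrightarrow> \<bar>arctan_cap a s\<bar> \<le> a * pi / 2"
  using mult_left_mono[OF abs_arctan_le[of "s / a"], of a] by (simp add: arctan_cap_def abs_mult)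

lemma continuous_on_arctan_cap: "continuous_on UNIV (arctan_cap a)"
  unfolding arctan_cap_def divide_inverse by (intro continuous_intros)

lemma continuous_on_arctan_cap': "continuous_on UNIV (arctan_cap' a)"
  unfolding arctan_cap'_def divide_inverse[of s a for s]
  by (intro continuous_intros) (simp add: add_nonneg_eq_0_iff)

lemma arctan_cap_nonneg: "0 < a \<Longrightarrow> 0 \<le> s \<Longrightarrow> 0 \<le> arctan_cap a s"
  by (simp add: arctan_cap_def)

lemma arctan_cap_mono: "0 < a \<Longrightarrow> s \<le> s' \<Longrightarrow> arctan_cap a s \<le> arctan_cap a s'"
  unfolding arctan_cap_def by (intro mult_left_mono arctan_monotone' divide_right_mono) auto

lemma arctan_cap_le: "0 < a \<Longrightarrow> 0 \<le> s \<Longrightarrow> arctan_cap a s \<le> s"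
  using arctan_le_self[of "s / a"] by (simp add: arctan_cap_def field_simps)

lemma arctan_ge_half: "0 \<le> u \<Longrightarrow> u \<le> 1 \<Longrightarrow> u / 2 \<le> arctan u"
proof -
  assume u: "0 \<le> u" "u \<le> 1"
  have "(\<lambda>x. arctan x - x / 2) 0 \<le> (\<lambda>x. arctan x - x / 2) u"
  proof (rule DERIV_nonneg_imp_nondecreasing[OF u(1)])
    fix x :: real assume x: "0 \<le> x" "x \<le> u"
    then have "x\<^sup>2 \<le> 1" using u by (intro power_le_one) auto
    then have "0 \<le> inverse (1 + x\<^sup>2) - 1 / 2" by (simp add: field_simps add_pos_nonneg)
    moreover have "((\<lambda>x. arctan x - x / 2) has_real_derivative inverse (1 + x\<^sup>2) - 1 / 2) (at x)"
      by (auto intro!: derivative_eq_intros)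
    ultimately show "\<exists>y. ((\<lambda>x. arctan x - x / 2) has_real_derivative y) (at x) \<and> 0 \<le> y" by blast
  qed
  then show ?thesis by simp
qed

lemma arctan_cap_ge_half: "0 < a \<Longrightarrow> 0 \<le> s \<Longrightarrow> s \<le> a \<Longrightarrow> s / 2 \<le> arctan_cap a s"
  using arctan_ge_half[of "s / a"] by (simp add: arctan_cap_def field_simps)

lemma tendsto_arctan_cap_at_top:
  assumes "0 < a" and "filterlim f at_top F"
  shows "((\<lambda>n. arctan_cap a (f n)) \<longlongrightarrow> a * pi / 2) F"
proof -
  have "filterlim (\<lambda>n. f n / a) at_top F"
    using filterlim_at_top_mult_tendsto_pos[OF tendsto_const[of "inverse a"] _ assms(2)] assms(1)
    by (simp add: divide_inverse mult.commute)
  then have "((\<lambda>n. arctan (f n / a)) \<longlongrightarrow> pi / 2) F"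
    by (rule filterlim_compose[OF tendsto_arctan_at_top])
  from tendsto_mult_left[OF this, of a] show ?thesis by (simp add: arctan_cap_def)
qed

lemma C1b_partials_arctan_cap:
  assumes a: "a > 0"
  shows "C1b_partials 1 (\<lambda>y. arctan_cap a (y 0 + c)) (\<lambda>i y. arctan_cap' a (y 0 + c))"
proof -
  have b1: "bounded (range (\<lambda>y::nat \<Rightarrow> real. arctan_cap a (y 0 + c)))"
    unfolding bounded_iff using abs_arctan_cap_le[OF a] by (metis real_norm_def rangeE)
  have b2: "bounded (range (\<lambda>y::nat \<Rightarrow> real. arctan_cap' a (y 0 + c)))"
    unfolding bounded_iff using arctan_cap'_bounds by (metis abs_of_pos real_norm_def rangeE)
  have d: "((\<lambda>s. arctan_cap a ((y(0 := s)) 0 + c)) has_real_derivative arctan_cap' a (y 0 + c)) (at (y 0))" for y :: "nat \<Rightarrow> real"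
  proof -
    have "((\<lambda>s. s + c) has_real_derivative 1) (at (y 0))" by (auto intro!: derivative_eq_intros)
    from DERIV_chain2[OF arctan_cap_DERIV[OF a] this] show ?thesis by simp
  qed
  have c: "continuous_on UNIV (\<lambda>y::nat \<Rightarrow> real. arctan_cap' a (y 0 + c))"
    by (intro continuous_on_compose2[OF continuous_on_arctan_cap'] continuous_intros continuous_on_product_coordinates) auto
  show ?thesis unfolding C1b_partials_def using b1 b2 d c by auto
qed

section \<open>Integrals over probability measures\<close>

text \<open>These two bounds need no measurability of \<open>f\<close>; they are applied to the time profile of the drift
  energy, \<open>t \<mapsto> \<integral>\<integral>|b|\<^sup>p d\<mu> dM\<^sub>t\<close>, whose measurability is not assumed.\<close>

lemma nn_integral_cmult_le:
  fixes f :: "'a \<Rightarrow> ennreal"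
  assumes c: "0 \<le> c"
  shows "(\<integral>\<^sup>+ x. ennreal c * f x \<partial>M) \<le> ennreal c * (\<integral>\<^sup>+ x. f x \<partial>M)"
proof (cases "c = 0")
  case True then show ?thesis by simp
next
  case False
  then have cp: "c > 0" using c by simp
  show ?thesis
    unfolding nn_integral_def[of M "\<lambda>x. ennreal c * f x"]
  proof (rule SUP_least)
    fix g assume g: "g \<in> {g. simple_function M g \<and> g \<le> (\<lambda>x. ennreal c * f x)}"
    define g' where "g' x = ennreal (1/c) * g x" for x
    have sg': "simple_function M g'" using g unfolding g'_def by (auto intro!: simple_function_mult)
    have gg: "g x = ennreal c * g' x" for x
    proof -
      have a: "ennreal c * g' x = (ennreal c * ennreal (1/c)) * g x"
        by (simp add: g'_def mult.assoc)
      have b: "ennreal c * ennreal (1/c) = 1"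
        using cp ennreal_mult[of c "1/c"] by simp
      show ?thesis using a b by simp
    qed
    have "g' \<le> f"
    proof (rule le_funI)
      fix x
      have "g x \<le> ennreal c * f x" using g by (auto simp: le_fun_def)
      then have "ennreal (1/c) * g x \<le> ennreal (1/c) * (ennreal c * f x)" by (rule mult_left_mono) simp
      also have "\<dots> = (ennreal (1/c) * ennreal c) * f x" by (simp add: mult.assoc)
      also have "ennreal (1/c) * ennreal c = 1" using cp ennreal_mult[of "1/c" c] by simp
      finally show "g' x \<le> f x" by (simp add: g'_def)
    qed
    have "integral\<^sup>S M g = ennreal c * integral\<^sup>S M g'"
      unfolding gg by (rule simple_integral_mult[OF sg'])
    also have "integral\<^sup>S M g' = integral\<^sup>N M g'" using sg' by (simp add: nn_integral_eq_simple_integral)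
    also have "integral\<^sup>N M g' \<le> integral\<^sup>N M f" using \<open>g' \<le> f\<close> by (intro nn_integral_mono) (auto simp: le_fun_def)
    finally show "integral\<^sup>S M g \<le> ennreal c * (\<integral>\<^sup>+ x. f x \<partial>M)"
      by (simp add: mult_left_mono)
  qed
qed

lemma nn_integral_add_le:
  fixes f c :: "'a \<Rightarrow> ennreal"
  assumes cm: "c \<in> borel_measurable M" and cf: "\<And>x. c x < top"
  shows "(\<integral>\<^sup>+ x. c x + f x \<partial>M) \<le> (\<integral>\<^sup>+ x. c x \<partial>M) + (\<integral>\<^sup>+ x. f x \<partial>M)"
  unfolding nn_integral_def[of M "\<lambda>x. c x + f x"]
proof (rule SUP_least)
  fix g assume g: "g \<in> {g. simple_function M g \<and> g \<le> (\<lambda>x. c x + f x)}"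
  then have gm: "g \<in> borel_measurable M" by (auto intro: borel_measurable_simple_function)
  have le: "g x \<le> min (g x) (c x) + (g x - c x)" for x
  proof (cases "g x \<le> c x")
    case True then show ?thesis by simp
  next
    case False
    then have "c x \<le> g x" by simp
    then have eq: "c x + (g x - c x) = g x" using cf[of x]
      by (metis add_diff_inverse_ennreal)
    have mn: "min (g x) (c x) = c x" using \<open>c x \<le> g x\<close> by simp
    show ?thesis by (metis eq mn order_refl)
  qed
  have df: "g x - c x \<le> f x" for x
  proof -
    have "g x \<le> c x + f x" using g by (auto simp: le_fun_def)
    then show ?thesis using cf[of x] by (simp add: ennreal_minus_le_iff less_top[symmetric])
  qed
  have "integral\<^sup>S M g = integral\<^sup>N M g" using g by (simp add: nn_integral_eq_simple_integral)
  also have "\<dots> \<le> (\<integral>\<^sup>+ x. min (g x) (c x) + (g x - c x) \<partial>M)"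
    by (intro nn_integral_mono le)
  also have "\<dots> = (\<integral>\<^sup>+ x. min (g x) (c x) \<partial>M) + (\<integral>\<^sup>+ x. (g x - c x) \<partial>M)"
    using gm cm by (intro nn_integral_add) auto
  also have "\<dots> \<le> (\<integral>\<^sup>+ x. c x \<partial>M) + (\<integral>\<^sup>+ x. f x \<partial>M)"
    by (intro add_mono nn_integral_mono df) auto
  finally show "integral\<^sup>S M g \<le> (\<integral>\<^sup>+ x. c x \<partial>M) + (\<integral>\<^sup>+ x. f x \<partial>M)" .
qed

lemma abs_integral_le_nn_integral:
  fixes f :: "'b \<Rightarrow> real"
  shows "ennreal \<bar>\<integral>x. f x \<partial>N\<bar> \<le> (\<integral>\<^sup>+x. ennreal \<bar>f x\<bar> \<partial>N)"
proof (cases "integrable N f")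
  case True
  show ?thesis using integral_norm_bound_ennreal[OF True] by simp
next
  case False
  then show ?thesis by (simp add: not_integrable_integral_eq)
qed

lemma Pd_D: "\<mu> \<in> Pd \<Longrightarrow> prob_space \<mu> \<and> sets \<mu> = sets (borel :: 'a::euclidean_space measure)"
  by (auto simp: space_prob_algebra)

lemma integrable_Pd_bounded:
  fixes f :: "'a::euclidean_space \<Rightarrow> real"
  assumes \<mu>: "\<mu> \<in> Pd" and f: "f \<in> borel_measurable borel" and B: "\<And>x. \<bar>f x\<bar> \<le> B"
  shows "integrable \<mu> f"
proof -
  interpret prob_space \<mu> using Pd_D[OF \<mu>] by simp
  have fm: "f \<in> borel_measurable \<mu>" using f Pd_D[OF \<mu>] by (simp cong: measurable_cong_sets)
  show ?thesis by (rule integrable_const_bound[where B=B]) (use fm B in auto)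
qed

lemma measurable_integral_Pd:
  fixes f :: "'a::euclidean_space \<Rightarrow> real"
  assumes f: "f \<in> borel_measurable borel"
  shows "(\<lambda>\<mu>. \<integral>x. f x \<partial>\<mu>) \<in> borel_measurable (prob_algebra (borel :: 'a measure))"
  unfolding prob_algebra_def by (intro measurable_restrict_space1 integral_measurable_subprob_algebra f)

lemma narrow_curve_M:
  assumes "narrow_curve T M" "t \<in> {0..T}"
  shows "sets (M t) = sets (prob_algebra (borel :: 'a::euclidean_space measure))"
    "space (M t) = Pd" "prob_space (M t)"
proof -
  have "M t \<in> space (prob_algebra (prob_algebra (borel :: 'a measure)))"
    using assms by (auto simp: narrow_curve_def)
  then show s: "sets (M t) = sets (prob_algebra (borel :: 'a::euclidean_space measure))" "prob_space (M t)"
    by (auto simp: space_prob_algebra)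
  show "space (M t) = Pd" using sets_eq_imp_space_eq[OF s(1)] .
qed

definition capped_moment :: "real \<Rightarrow> real \<Rightarrow> 'a::euclidean_space measure \<Rightarrow> real" where
  "capped_moment p R \<mu> = (\<integral>x. capped_bracket_pow p R x \<partial>\<mu>)"

lemma borel_measurable_capped_bracket_pow: "R > 0 \<Longrightarrow> capped_bracket_pow p R \<in> borel_measurable borel"
  by (rule borel_measurable_continuous_onI[OF continuous_on_capped_bracket_pow])

lemma abs_capped_bracket_pow_le: "R > 0 \<Longrightarrow> \<bar>capped_bracket_pow p R x\<bar> \<le> 3/2 * R"
  using capped_bracket_pow_nonneg[of R p x] capped_bracket_pow_le[of R p x] by auto

lemma capped_moment_shift:
  assumes \<mu>: "\<mu> \<in> Pd" and R: "R > 0"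
  shows "(\<integral>x. capped_bracket_pow p R x - 3/2 * R \<partial>\<mu>) + 3/2 * R = capped_moment p R \<mu>"
proof -
  interpret prob_space \<mu> using Pd_D[OF \<mu>] by simp
  have i: "integrable \<mu> (capped_bracket_pow p R)" by (rule integrable_Pd_bounded[OF \<mu> borel_measurable_capped_bracket_pow[OF R] abs_capped_bracket_pow_le[OF R]])
  have "(\<integral>x. capped_bracket_pow p R x - 3/2 * R \<partial>\<mu>) = capped_moment p R \<mu> - 3/2 * R"
    using i by (simp add: capped_moment_def prob_space)
  then show ?thesis by simp
qed

lemma integrable_capped_bracket_pow: "\<mu> \<in> Pd \<Longrightarrow> R > 0 \<Longrightarrow> integrable \<mu> (capped_bracket_pow p R)"
  by (rule integrable_Pd_bounded[OF _ borel_measurable_capped_bracket_pow abs_capped_bracket_pow_le])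

lemma capped_moment_nonneg: "\<mu> \<in> Pd \<Longrightarrow> R > 0 \<Longrightarrow> 0 \<le> capped_moment p R \<mu>"
  unfolding capped_moment_def by (intro integral_nonneg_AE AE_I2 capped_bracket_pow_nonneg)

lemma capped_moment_le: "\<mu> \<in> Pd \<Longrightarrow> R > 0 \<Longrightarrow> capped_moment p R \<mu> \<le> 3/2 * R"
proof -
  assume \<mu>: "\<mu> \<in> Pd" and R: "R > 0"
  interpret prob_space \<mu> using Pd_D[OF \<mu>] by simp
  have "capped_moment p R \<mu> \<le> (\<integral>x. 3/2 * R \<partial>\<mu>)" unfolding capped_moment_def
    using integrable_capped_bracket_pow[OF \<mu> R] capped_bracket_pow_le[OF R] by (intro integral_mono) auto
  then show ?thesis by (simp add: prob_space)
qed

lemma borel_measurable_capped_moment: "R > 0 \<Longrightarrow> capped_moment p R \<in> borel_measurable (prob_algebra (borel :: 'a::euclidean_space measure))"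
  unfolding capped_moment_def[abs_def] by (rule measurable_integral_Pd[OF borel_measurable_capped_bracket_pow])

lemma narrow_continuous_integral_comp:
  fixes f :: "'a::euclidean_space \<Rightarrow> real" and F :: "real \<Rightarrow> real"
  assumes f: "continuous_on UNIV f" "bounded (range f)" and F: "continuous_on UNIV F"
  shows "narrow_continuous (\<lambda>\<mu>. F (\<integral>x. f x \<partial>\<mu>))"
  unfolding narrow_continuous_def
proof (intro allI impI)
  fix \<mu>s :: "nat \<Rightarrow> 'a measure" and \<mu> :: "'a measure"
  assume "(\<forall>n. \<mu>s n \<in> Pd) \<and> \<mu> \<in> Pd \<and> narrow_conv \<mu>s \<mu>"
  then have "(\<lambda>n. \<integral>x. f x \<partial>(\<mu>s n)) \<longlonglongrightarrow> (\<integral>x. f x \<partial>\<mu>)"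
    using f unfolding narrow_conv_def by blast
  moreover have "isCont F (\<integral>x. f x \<partial>\<mu>)" using F by (simp add: continuous_on_eq_continuous_at)
  ultimately show "(\<lambda>n. F (\<integral>x. f x \<partial>(\<mu>s n))) \<longlonglongrightarrow> F (\<integral>x. f x \<partial>\<mu>)"
    by (rule isCont_tendsto_compose[rotated])
qed

lemma continuous_on_narrow_curve_integral:
  fixes M :: "real \<Rightarrow> 'a::euclidean_space measure measure" and f :: "'a \<Rightarrow> real" and F :: "real \<Rightarrow> real"
  assumes curve: "narrow_curve T M"
    and f: "continuous_on UNIV f" "\<And>x. \<bar>f x\<bar> \<le> B" and F: "continuous_on UNIV F" "\<And>s. \<bar>F s\<bar> \<le> C"
  shows "continuous_on {0..T} (\<lambda>t. \<integral>\<mu>. F (\<integral>x. f x \<partial>\<mu>) \<partial>(M t))"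
proof -
  let ?\<Phi> = "\<lambda>\<mu>. F (\<integral>x. f x \<partial>\<mu>)"
  have "?\<Phi> \<in> borel_measurable (prob_algebra borel)"
    by (intro borel_measurable_continuous_on[OF F(1)] measurable_integral_Pd borel_measurable_continuous_onI[OF f(1)])
  moreover have "bounded (?\<Phi> ` Pd)" unfolding bounded_iff using F(2) by auto
  moreover have "narrow_continuous ?\<Phi>"
    using f by (intro narrow_continuous_integral_comp F(1)) (auto simp: bounded_iff)
  ultimately show ?thesis
    using curve unfolding continuous_on_sequentially comp_def narrow_curve_def by blast
qed

definition bracket_moment :: "real \<Rightarrow> 'a::euclidean_space measure \<Rightarrow> ennreal" where
  "bracket_moment p \<mu> = (\<integral>\<^sup>+x. ennreal (bracket_pow p x) \<partial>\<mu>)"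

lemma borel_measurable_bracket_pow: "bracket_pow p \<in> borel_measurable borel"
  by (rule borel_measurable_continuous_onI[OF continuous_on_bracket_pow])

lemma borel_measurable_bracket_moment: "bracket_moment p \<in> borel_measurable (prob_algebra (borel :: 'a::euclidean_space measure))"
  unfolding bracket_moment_def[abs_def] prob_algebra_def
  by (intro measurable_restrict_space1 nn_integral_measurable_subprob_algebra measurable_compose[OF borel_measurable_bracket_pow measurable_ennreal])

lemma borel_measurable_pmom: "pmom p \<in> borel_measurable (prob_algebra (borel :: 'a::euclidean_space measure))"
  unfolding pmom_def[abs_def] prob_algebra_def
  by (intro measurable_restrict_space1 nn_integral_measurable_subprob_algebra) measurable

lemma pmom_le_bracket_moment: "p \<ge> 1 \<Longrightarrow> pmom p \<mu> \<le> bracket_moment p \<mu>"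
  unfolding pmom_def bracket_moment_def by (intro nn_integral_mono ennreal_leI norm_powr_le_bracket_pow)

lemma bracket_moment_le:
  assumes p: "p \<ge> 1" and \<mu>: "\<mu> \<in> Pd"
  shows "bracket_moment p \<mu> \<le> ennreal (2 powr (p / 2)) * (1 + pmom p \<mu>)"
proof -
  interpret prob_space \<mu> using Pd_D[OF \<mu>] by simp
  have sets: "sets \<mu> = sets borel" using Pd_D[OF \<mu>] by simp
  have m: "(\<lambda>x. ennreal (norm x powr p)) \<in> borel_measurable \<mu>"
    using sets by (simp cong: measurable_cong_sets)
  have "bracket_moment p \<mu> \<le> (\<integral>\<^sup>+x. ennreal (2 powr (p / 2)) * (1 + ennreal (norm x powr p)) \<partial>\<mu>)"
    unfolding bracket_moment_def
  proof (rule nn_integral_mono)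
    fix x
    have "ennreal (bracket_pow p x) \<le> ennreal (2 powr (p / 2) * (1 + norm x powr p))"
      using bracket_pow_le[OF p, of x] by (rule ennreal_leI)
    also have "\<dots> = ennreal (2 powr (p / 2)) * (1 + ennreal (norm x powr p))"
      by (simp add: ennreal_mult ennreal_plus)
    finally show "ennreal (bracket_pow p x) \<le> ennreal (2 powr (p / 2)) * (1 + ennreal (norm x powr p))" .
  qed
  also have "\<dots> = ennreal (2 powr (p / 2)) * (1 + pmom p \<mu>)"
    using m by (simp add: nn_integral_cmult nn_integral_add emeasure_space_1 pmom_def)
  finally show ?thesis .
qed

lemma bracket_moment_less_top:
  assumes "p \<ge> 1" "\<mu> \<in> Pd" "pmom p \<mu> < \<infinity>"
  shows "bracket_moment p \<mu> < \<infinity>"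
  using bracket_moment_le[OF assms(1,2)] assms(3)
  by (auto simp: ennreal_mult_less_top less_top intro: le_less_trans)

lemma nn_integral_capped_bracket_pow:
  assumes \<mu>: "\<mu> \<in> Pd" and R: "R > 0"
  shows "ennreal (capped_moment p R \<mu>) = (\<integral>\<^sup>+x. ennreal (capped_bracket_pow p R x) \<partial>\<mu>)"
  unfolding capped_moment_def using R
  by (intro nn_integral_eq_integral[symmetric] integrable_capped_bracket_pow[OF \<mu> R] AE_I2 capped_bracket_pow_nonneg)

lemma capped_moment_le_bracket_moment:
  assumes \<mu>: "\<mu> \<in> Pd" and R: "R > 0"
  shows "ennreal (capped_moment p R \<mu>) \<le> bracket_moment p \<mu>"
  unfolding nn_integral_capped_bracket_pow[OF assms] bracket_moment_def by (intro nn_integral_mono ennreal_leI capped_bracket_pow_le_bracket_pow R)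

lemma bracket_moment_le_liminf:
  assumes \<mu>: "\<mu> \<in> Pd" and p: "p \<ge> 1"
  shows "bracket_moment p \<mu> \<le> liminf (\<lambda>n. ennreal (capped_moment p (real n + 1) \<mu>))"
proof -
  have sets: "sets \<mu> = sets borel" using Pd_D[OF \<mu>] by simp
  have lim: "liminf (\<lambda>n. ennreal (capped_bracket_pow p (real n + 1) x)) = ennreal (bracket_pow p x)" for x
  proof (rule lim_imp_Liminf)
    show "((\<lambda>n. ennreal (capped_bracket_pow p (real n + 1) x)) \<longlongrightarrow> ennreal (bracket_pow p x)) sequentially"
    proof (rule tendsto_eventually)
      obtain N :: nat where N: "bracket_pow p x \<le> real N" using real_arch_simple by blast
      show "\<forall>\<^sub>F n in sequentially. ennreal (capped_bracket_pow p (real n + 1) x) = ennreal (bracket_pow p x)"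
        using eventually_ge_at_top[of N]
      proof eventually_elim
        case (elim n)
        then have "bracket_pow p x \<le> real n + 1" using N by linarith
        then show ?case by (simp add: capped_bracket_pow_eq_bracket_pow)
      qed
    qed
  qed simp
  have "bracket_moment p \<mu> = (\<integral>\<^sup>+x. liminf (\<lambda>n. ennreal (capped_bracket_pow p (real n + 1) x)) \<partial>\<mu>)"
    unfolding bracket_moment_def lim ..
  also have "\<dots> \<le> liminf (\<lambda>n. \<integral>\<^sup>+x. ennreal (capped_bracket_pow p (real n + 1) x) \<partial>\<mu>)"
  proof (rule nn_integral_liminf)
    fix i :: nat
    have "(\<lambda>x. ennreal (capped_bracket_pow p (real i + 1) x)) \<in> borel_measurable borel"
      by (intro measurable_compose[OF borel_measurable_capped_bracket_pow measurable_ennreal]) simp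
    then show "(\<lambda>x. ennreal (capped_bracket_pow p (real i + 1) x)) \<in> borel_measurable \<mu>"
      using sets by (simp cong: measurable_cong_sets)
  qed
  also have "\<dots> = liminf (\<lambda>n. ennreal (capped_moment p (real n + 1) \<mu>))"
    using nn_integral_capped_bracket_pow[OF \<mu>] by simp
  finally show ?thesis .
qed

lemma borel_measurable_arctan_cap_capped_moment: "R > 0 \<Longrightarrow> (\<lambda>\<mu>. arctan_cap a (capped_moment p R \<mu>)) \<in> borel_measurable (prob_algebra (borel :: 'a::euclidean_space measure))"
  by (rule borel_measurable_continuous_on[OF continuous_on_arctan_cap borel_measurable_capped_moment])

lemma real_Suc_at_top: "filterlim (\<lambda>j. real j + 1) at_top sequentially"
proof -
  have "filterlim (\<lambda>j. real (Suc j)) at_top sequentially"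
    using filterlim_sequentially_Suc[of real at_top] filterlim_real_sequentially by simp
  then show ?thesis by (simp add: add.commute)
qed

lemma abs_capped_moment_le: "\<mu> \<in> Pd \<Longrightarrow> R > 0 \<Longrightarrow> \<bar>capped_moment p R \<mu>\<bar> \<le> 3/2 * R"
  using capped_moment_nonneg[of \<mu> R p] capped_moment_le[of \<mu> R p] by auto

lemma abs_integral_capped_grad_le:
  fixes v :: "'a::euclidean_space \<Rightarrow> 'a"
  assumes \<mu>: "\<mu> \<in> Pd" and R: "0 < R" and p: "1 \<le> p" and d: "0 < d"
    and c: "0 \<le> c" "c \<le> 1" and v: "v \<in> borel_measurable \<mu>"
  shows "ennreal \<bar>c * (\<integral>x. capped_bracket_pow_grad p R x \<bullet> v x \<partial>\<mu>)\<bar>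
    \<le> ennreal (2 * p * d) * ennreal (c * capped_moment p R \<mu>)
      + ennreal (p * d powr (1 - p)) * (\<integral>\<^sup>+x. ennreal (norm (v x) powr p) \<partial>\<mu>)"
proof -
  define c\<^sub>2 where "c\<^sub>2 = p * d powr (1 - p)"
  have c\<^sub>2: "0 \<le> c\<^sub>2" using p d by (simp add: c\<^sub>2_def)
  have \<phi>_meas: "(\<lambda>x. ennreal (capped_bracket_pow p R x)) \<in> borel_measurable \<mu>"
    using measurable_compose[OF borel_measurable_capped_bracket_pow[OF R] measurable_ennreal] Pd_D[OF \<mu>]
    by (simp cong: measurable_cong_sets)
  have pointwise: "ennreal \<bar>c * (capped_bracket_pow_grad p R x \<bullet> v x)\<bar>
      \<le> ennreal (2 * p * d) * (ennreal c * ennreal (capped_bracket_pow p R x))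
        + ennreal c\<^sub>2 * ennreal (norm (v x) powr p)" for x
  proof -
    have \<phi>: "0 \<le> capped_bracket_pow p R x" by (rule capped_bracket_pow_nonneg[OF R])
    have "\<bar>c * (capped_bracket_pow_grad p R x \<bullet> v x)\<bar> = c * \<bar>capped_bracket_pow_grad p R x \<bullet> v x\<bar>"
      using c by (simp add: abs_mult)
    also have "\<dots> \<le> c * (2 * p * d * capped_bracket_pow p R x + c\<^sub>2 * norm (v x) powr p)"
      unfolding c\<^sub>2_def using c by (intro mult_left_mono inner_capped_bracket_pow_grad_le R p d) auto
    also have "\<dots> \<le> 2 * p * d * (c * capped_bracket_pow p R x) + c\<^sub>2 * norm (v x) powr p"
      using mult_right_mono[OF c(2), of "c\<^sub>2 * norm (v x) powr p"] c\<^sub>2 by (simp add: algebra_simps)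
    finally have "ennreal \<bar>c * (capped_bracket_pow_grad p R x \<bullet> v x)\<bar>
        \<le> ennreal (2 * p * d * (c * capped_bracket_pow p R x) + c\<^sub>2 * norm (v x) powr p)"
      by (rule ennreal_leI)
    also have "\<dots> = ennreal (2 * p * d) * (ennreal c * ennreal (capped_bracket_pow p R x))
        + ennreal c\<^sub>2 * ennreal (norm (v x) powr p)"
      using c \<phi> p d c\<^sub>2 by (simp add: ennreal_plus ennreal_mult)
    finally show ?thesis .
  qed
  have "ennreal \<bar>c * (\<integral>x. capped_bracket_pow_grad p R x \<bullet> v x \<partial>\<mu>)\<bar>
      = ennreal \<bar>\<integral>x. c * (capped_bracket_pow_grad p R x \<bullet> v x) \<partial>\<mu>\<bar>"
    by simp
  also have "\<dots> \<le> (\<integral>\<^sup>+x. ennreal \<bar>c * (capped_bracket_pow_grad p R x \<bullet> v x)\<bar> \<partial>\<mu>)"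
    by (rule abs_integral_le_nn_integral)
  also have "\<dots> \<le> (\<integral>\<^sup>+x. ennreal (2 * p * d) * (ennreal c * ennreal (capped_bracket_pow p R x))
      + ennreal c\<^sub>2 * ennreal (norm (v x) powr p) \<partial>\<mu>)"
    by (intro nn_integral_mono pointwise)
  also have "\<dots> = ennreal (2 * p * d) * (ennreal c * (\<integral>\<^sup>+x. ennreal (capped_bracket_pow p R x) \<partial>\<mu>))
      + ennreal c\<^sub>2 * (\<integral>\<^sup>+x. ennreal (norm (v x) powr p) \<partial>\<mu>)"
    using \<phi>_meas v by (simp add: nn_integral_add nn_integral_cmult)
  also have "ennreal c * (\<integral>\<^sup>+x. ennreal (capped_bracket_pow p R x) \<partial>\<mu>) = ennreal (c * capped_moment p R \<mu>)"
    using c capped_moment_nonneg[OF \<mu> R]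
    by (simp add: nn_integral_capped_bracket_pow[OF \<mu> R, symmetric] ennreal_mult)
  finally show ?thesis by (simp add: c\<^sub>2_def)
qed

lemma filterlim_capped_moment_at_top:
  assumes \<mu>: "\<mu> \<in> Pd" and p: "p \<ge> 1" and inf: "bracket_moment p \<mu> = \<infinity>"
  shows "filterlim (\<lambda>n. capped_moment p (real n + 1) \<mu>) at_top sequentially"
proof -
  have li: "liminf (\<lambda>n. ennreal (capped_moment p (real n + 1) \<mu>)) = \<infinity>"
    using bracket_moment_le_liminf[OF \<mu> p] inf by (simp add: top_unique)
  then have "limsup (\<lambda>n. ennreal (capped_moment p (real n + 1) \<mu>)) = \<infinity>"
    using Liminf_le_Limsup[of sequentially "\<lambda>n. ennreal (capped_moment p (real n + 1) \<mu>)"]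
    by (simp add: top_unique)
  with li have "(\<lambda>n. ennreal (capped_moment p (real n + 1) \<mu>)) \<longlonglongrightarrow> \<infinity>"
    by (simp add: tendsto_iff_Liminf_eq_Limsup)
  then show ?thesis by (simp add: ennreal_tendsto_top_eq_at_top)
qed

lemma tendsto_integral_arctan_div_0:
  fixes g :: "'b \<Rightarrow> real"
  assumes "finite_measure N" and g: "g \<in> borel_measurable N"
  shows "(\<lambda>j. \<integral>x. arctan (g x / (real j + 1)) \<partial>N) \<longlonglongrightarrow> 0"
proof -
  interpret finite_measure N by fact
  have "(\<lambda>j. \<integral>x. arctan (g x / (real j + 1)) \<partial>N) \<longlonglongrightarrow> (\<integral>x. 0 \<partial>N)"
  proof (rule integral_dominated_convergence[where w="\<lambda>_. pi / 2"])
    show "(\<lambda>x. arctan (g x / (real j + 1))) \<in> borel_measurable N" for j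
      using g by measurable
    show "AE x in N. norm (arctan (g x / (real j + 1))) \<le> pi / 2" for j
      using abs_arctan_le by (intro AE_I2) simp
    have "(\<lambda>j. g x / (real j + 1)) \<longlonglongrightarrow> 0" for x
      by (intro tendsto_divide_0[OF tendsto_const] filterlim_at_top_imp_at_infinity real_Suc_at_top)
    then show "AE x in N. (\<lambda>j. arctan (g x / (real j + 1))) \<longlonglongrightarrow> 0"
      using tendsto_arctan by fastforce
  qed auto
  then show ?thesis by simp
qed

section \<open>Moments along the continuity equation\<close>

locale weak_continuity_equation =
  fixes p T :: real
    and M :: "real \<Rightarrow> 'a::euclidean_space measure measure"
    and b :: "real \<Rightarrow> 'a \<Rightarrow> 'a measure \<Rightarrow> 'a"
  assumes p: "p \<ge> 1" and T: "T > 0"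
    and curve: "narrow_curve T M"
    and b_meas: "(\<lambda>(t, x, \<mu>). b t x \<mu>) \<in>
        borel_measurable (restrict_space borel {0..T} \<Otimes>\<^sub>M (borel :: 'a measure) \<Otimes>\<^sub>M prob_algebra (borel :: 'a measure))"
    and b_int: "(\<integral>\<^sup>+ t. indicator {0..T} t *
        (\<integral>\<^sup>+ \<mu>. (\<integral>\<^sup>+ x. ennreal (norm (b t x \<mu>) powr p) \<partial>\<mu>) \<partial>(M t)) \<partial>lborel) < \<infinity>"
    and CE: "\<And>k \<phi> g \<Psi> D \<eta>.
        (\<forall>i<k. C1c_grad (\<phi> i) (g i)) \<Longrightarrow> C1b_partials k \<Psi> D \<Longrightarrow> test_fun T \<eta> \<Longrightarrow>
        - (LINT t:{0<..<T}|lborel. deriv \<eta> t *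
              (\<integral>\<mu>. \<Psi> (\<lambda>i. \<integral>x. \<phi> i x \<partial>\<mu>) \<partial>(M t)))
        = (LINT t:{0<..<T}|lborel. \<eta> t *
              (\<integral>\<mu>. (\<integral>x. (\<Sum>i<k. D i (\<lambda>j. \<integral>y. \<phi> j y \<partial>\<mu>) *\<^sub>R g i x) \<bullet> b t x \<mu> \<partial>\<mu>) \<partial>(M t)))"
begin

definition drift_energy :: real where
  "drift_energy = enn2real (\<integral>\<^sup>+ t. indicator {0..T} t *
     (\<integral>\<^sup>+ \<mu>. (\<integral>\<^sup>+ x. ennreal (norm (b t x \<mu>) powr p) \<partial>\<mu>) \<partial>(M t)) \<partial>lborel)"

lemma drift_energy_nonneg: "0 \<le> drift_energy"
  by (simp add: drift_energy_def)

lemma nn_integral_drift_eq: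
  "(\<integral>\<^sup>+ t. indicator {0..T} t * (\<integral>\<^sup>+ \<mu>. (\<integral>\<^sup>+ x. ennreal (norm (b t x \<mu>) powr p) \<partial>\<mu>) \<partial>(M t)) \<partial>lborel)
    = ennreal drift_energy"
  using b_int by (simp add: drift_energy_def less_top ennreal_enn2real)

lemma space_M: "t \<in> {0..T} \<Longrightarrow> space (M t) = Pd"
  using narrow_curve_M(2)[OF curve] .

lemma prob_space_M: "t \<in> {0..T} \<Longrightarrow> prob_space (M t)"
  using narrow_curve_M(3)[OF curve] .

lemma measurable_M:
  "f \<in> borel_measurable (prob_algebra borel) \<Longrightarrow> t \<in> {0..T} \<Longrightarrow> f \<in> borel_measurable (M t)"
  using narrow_curve_M(1)[OF curve] by (simp cong: measurable_cong_sets)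

lemma integrable_M:
  fixes f :: "'a measure \<Rightarrow> real"
  assumes "t \<in> {0..T}" "f \<in> borel_measurable (prob_algebra borel)" "\<And>\<mu>. \<mu> \<in> Pd \<Longrightarrow> \<bar>f \<mu>\<bar> \<le> B"
  shows "integrable (M t) f"
proof -
  interpret prob_space "M t" using prob_space_M[OF assms(1)] .
  show ?thesis
    by (rule integrable_const_bound[where B = B])
      (use assms(3) space_M[OF assms(1)] measurable_M[OF assms(2,1)] in auto)
qed

lemma measurable_drift_slice:
  assumes "t \<in> {0..T}"
  shows "(\<lambda>(\<mu>, x). b t x \<mu>) \<in> borel_measurable (prob_algebra (borel :: 'a measure) \<Otimes>\<^sub>M borel)"
proof -
  have "(\<lambda>z. (t, snd z, fst z)) \<in> prob_algebra (borel :: 'a measure) \<Otimes>\<^sub>M (borel :: 'a measure) \<rightarrow>\<^sub>M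
      restrict_space borel {0..T} \<Otimes>\<^sub>M (borel :: 'a measure) \<Otimes>\<^sub>M prob_algebra (borel :: 'a measure)"
    using assms by (intro measurable_Pair measurable_const measurable_snd measurable_fst)
      (auto simp: space_restrict_space)
  from measurable_compose[OF this b_meas] show ?thesis by (simp add: case_prod_beta')
qed

lemma measurable_drift:
  assumes "t \<in> {0..T}" "\<mu> \<in> Pd"
  shows "(\<lambda>x. b t x \<mu>) \<in> borel_measurable \<mu>"
proof -
  have "(\<lambda>x. b t x \<mu>) \<in> borel_measurable (borel :: 'a measure)"
    using measurable_compose[OF measurable_Pair1'[OF assms(2)] measurable_drift_slice[OF assms(1)]] by simp
  then show ?thesis using Pd_D[OF assms(2)] by (simp cong: measurable_cong_sets)
qed

lemma measurable_drift_energy: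
  assumes "t \<in> {0..T}"
  shows "(\<lambda>\<mu>. \<integral>\<^sup>+x. ennreal (norm (b t x \<mu>) powr p) \<partial>\<mu>) \<in> borel_measurable (M t)"
proof -
  have "(\<lambda>(\<mu>, x). ennreal (norm (b t x \<mu>) powr p)) \<in> borel_measurable (prob_algebra (borel :: 'a measure) \<Otimes>\<^sub>M borel)"
    using measurable_drift_slice[OF assms]
    by (auto simp: case_prod_beta' intro!: measurable_compose[where g = "\<lambda>v. ennreal (norm v powr p)"])
  moreover have "(\<lambda>\<mu>. \<mu>) \<in> prob_algebra (borel :: 'a measure) \<rightarrow>\<^sub>M subprob_algebra borel"
    by (rule measurable_prob_algebraD) (simp add: measurable_ident_sets)
  ultimately have "(\<lambda>\<mu>. \<integral>\<^sup>+x. ennreal (norm (b t x \<mu>) powr p) \<partial>\<mu>) \<in> borel_measurable (prob_algebra borel)"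
    by (rule nn_integral_measurable_subprob_algebra2)
  then show ?thesis by (rule measurable_M[OF _ assms])
qed

definition capped_moment_flux :: "real \<Rightarrow> real \<Rightarrow> real \<Rightarrow> real" where
  "capped_moment_flux a R t =
     (\<integral>\<mu>. arctan_cap' a (capped_moment p R \<mu>) * (\<integral>x. capped_bracket_pow_grad p R x \<bullet> b t x \<mu> \<partial>\<mu>) \<partial>(M t))"

text \<open>The cylinder function is \<open>\<mu> \<mapsto> \<Psi>\<^sub>a(\<integral>\<phi>\<^sub>R d\<mu>)\<close>; as \<open>\<phi>\<^sub>R\<close> is constant \<open>3R/2\<close> far out,
  it is tested as \<open>\<phi>\<^sub>R - 3R/2 \<in> C\<^sup>1\<^sub>c\<close> with the constant moved into \<open>\<Psi>\<close>.\<close>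

lemma capped_moment_weak_derivative:
  assumes a: "0 < a" and R: "0 < R" and \<eta>: "test_fun T \<eta>"
  shows "- (LINT t:{0<..<T}|lborel. deriv \<eta> t * (\<integral>\<mu>. arctan_cap a (capped_moment p R \<mu>) \<partial>(M t)))
    = (LINT t:{0<..<T}|lborel. \<eta> t * capped_moment_flux a R t)"
proof -
  let ?\<phi> = "\<lambda>(i::nat) x. capped_bracket_pow p R x - 3/2 * R"
  let ?\<Psi> = "\<lambda>y. arctan_cap a (y 0 + 3/2 * R)"
  let ?D = "\<lambda>(i::nat) y. arctan_cap' a (y 0 + 3/2 * R)"
  have shift: "(\<integral>x. capped_bracket_pow p R x - 3/2 * R \<partial>\<mu>) + 3/2 * R = capped_moment p R \<mu>"
    if "\<mu> \<in> space (M t)" "t \<in> {0<..<T}" for \<mu> t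
    using that space_M[of t] by (intro capped_moment_shift R) auto
  have "- (LINT t:{0<..<T}|lborel. deriv \<eta> t * (\<integral>\<mu>. ?\<Psi> (\<lambda>i. \<integral>x. ?\<phi> i x \<partial>\<mu>) \<partial>(M t)))
      = (LINT t:{0<..<T}|lborel. \<eta> t *
          (\<integral>\<mu>. (\<integral>x. (\<Sum>i<1. ?D i (\<lambda>j. \<integral>y. ?\<phi> j y \<partial>\<mu>) *\<^sub>R capped_bracket_pow_grad p R x) \<bullet> b t x \<mu> \<partial>\<mu>) \<partial>(M t)))"
    using C1c_grad_capped_bracket_pow[OF R p] C1b_partials_arctan_cap[OF a] \<eta>
    by (intro CE) auto
  moreover have "(LINT t:{0<..<T}|lborel. deriv \<eta> t * (\<integral>\<mu>. ?\<Psi> (\<lambda>i. \<integral>x. ?\<phi> i x \<partial>\<mu>) \<partial>(M t)))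
      = (LINT t:{0<..<T}|lborel. deriv \<eta> t * (\<integral>\<mu>. arctan_cap a (capped_moment p R \<mu>) \<partial>(M t)))"
    using shift by (intro set_lebesgue_integral_cong) (auto intro!: Bochner_Integration.integral_cong)
  moreover have "(LINT t:{0<..<T}|lborel. \<eta> t *
          (\<integral>\<mu>. (\<integral>x. (\<Sum>i<1. ?D i (\<lambda>j. \<integral>y. ?\<phi> j y \<partial>\<mu>) *\<^sub>R capped_bracket_pow_grad p R x) \<bullet> b t x \<mu> \<partial>\<mu>) \<partial>(M t)))
      = (LINT t:{0<..<T}|lborel. \<eta> t * capped_moment_flux a R t)"
    unfolding capped_moment_flux_def using shift
    by (intro set_lebesgue_integral_cong) (auto intro!: Bochner_Integration.integral_cong)
  ultimately show ?thesis by simp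
qed

lemma abs_capped_moment_flux_le:
  assumes a: "0 < a" and R: "0 < R" and d: "0 < d" and t: "t \<in> {0..T}"
  shows "ennreal \<bar>capped_moment_flux a R t\<bar>
    \<le> ennreal (2 * p * d) * (\<integral>\<^sup>+\<mu>. ennreal (arctan_cap' a (capped_moment p R \<mu>) * capped_moment p R \<mu>) \<partial>(M t))
      + ennreal (p * d powr (1 - p)) * (\<integral>\<^sup>+\<mu>. (\<integral>\<^sup>+x. ennreal (norm (b t x \<mu>) powr p) \<partial>\<mu>) \<partial>(M t))"
proof -
  have m: "(\<lambda>\<mu>. ennreal (arctan_cap' a (capped_moment p R \<mu>) * capped_moment p R \<mu>)) \<in> borel_measurable (M t)"
    by (intro measurable_M t measurable_compose[OF _ measurable_ennreal] borel_measurable_times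
        borel_measurable_continuous_on[OF continuous_on_arctan_cap'] borel_measurable_capped_moment[OF R])
  have "ennreal \<bar>capped_moment_flux a R t\<bar>
      \<le> (\<integral>\<^sup>+\<mu>. ennreal \<bar>arctan_cap' a (capped_moment p R \<mu>) * (\<integral>x. capped_bracket_pow_grad p R x \<bullet> b t x \<mu> \<partial>\<mu>)\<bar> \<partial>(M t))"
    unfolding capped_moment_flux_def by (rule abs_integral_le_nn_integral)
  also have "\<dots> \<le> (\<integral>\<^sup>+\<mu>. ennreal (2 * p * d) * ennreal (arctan_cap' a (capped_moment p R \<mu>) * capped_moment p R \<mu>)
      + ennreal (p * d powr (1 - p)) * (\<integral>\<^sup>+x. ennreal (norm (b t x \<mu>) powr p) \<partial>\<mu>) \<partial>(M t))"
    using arctan_cap'_bounds space_M[OF t] measurable_drift[OF t]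
    by (intro nn_integral_mono abs_integral_capped_grad_le R p d) (auto intro: less_imp_le)
  also have "\<dots> = ennreal (2 * p * d) * (\<integral>\<^sup>+\<mu>. ennreal (arctan_cap' a (capped_moment p R \<mu>) * capped_moment p R \<mu>) \<partial>(M t))
      + ennreal (p * d powr (1 - p)) * (\<integral>\<^sup>+\<mu>. (\<integral>\<^sup>+x. ennreal (norm (b t x \<mu>) powr p) \<partial>\<mu>) \<partial>(M t))"
    using m measurable_drift_energy[OF t] by (simp add: nn_integral_add nn_integral_cmult)
  finally show ?thesis .
qed

lemma capped_moment_flux_integral_le:
  assumes a: "0 < a" and R: "0 < R" and d: "0 < d" and Z: "0 \<le> Z"
    and Z_bound: "\<And>s. s \<in> {0..T} \<Longrightarrow>
      (\<integral>\<^sup>+\<mu>. ennreal (arctan_cap' a (capped_moment p R \<mu>) * capped_moment p R \<mu>) \<partial>(M s)) \<le> ennreal Z"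
  shows "(\<integral>\<^sup>+ t. indicator {0<..<T} t * ennreal \<bar>capped_moment_flux a R t\<bar> \<partial>lborel)
    \<le> ennreal (2 * p * d * Z * T + p * d powr (1 - p) * drift_energy)"
proof -
  define c\<^sub>1 where "c\<^sub>1 = 2 * p * d * Z"
  define c\<^sub>2 where "c\<^sub>2 = p * d powr (1 - p)"
  define Q where "Q t = (\<integral>\<^sup>+\<mu>. (\<integral>\<^sup>+x. ennreal (norm (b t x \<mu>) powr p) \<partial>\<mu>) \<partial>(M t))" for t
  have c: "0 \<le> c\<^sub>1" "0 \<le> c\<^sub>2" using p d Z by (simp_all add: c\<^sub>1_def c\<^sub>2_def)
  have pointwise: "indicator {0<..<T} t * ennreal \<bar>capped_moment_flux a R t\<bar>
      \<le> indicator {0<..<T} t * ennreal c\<^sub>1 + ennreal c\<^sub>2 * (indicator {0..T} t * Q t)" for t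
  proof (cases "t \<in> {0<..<T}")
    case True
    then have t: "t \<in> {0..T}" by auto
    have "ennreal \<bar>capped_moment_flux a R t\<bar> \<le> ennreal (2 * p * d) * ennreal Z + ennreal c\<^sub>2 * Q t"
      using abs_capped_moment_flux_le[OF a R d t] add_mono[OF mult_left_mono[OF Z_bound[OF t]] order_refl]
      unfolding Q_def c\<^sub>2_def by (rule order_trans) simp
    also have "ennreal (2 * p * d) * ennreal Z = ennreal c\<^sub>1"
      using p d Z by (simp add: c\<^sub>1_def ennreal_mult[symmetric])
    finally show ?thesis using True t by simp
  qed simp
  have "(\<integral>\<^sup>+ t. indicator {0<..<T} t * ennreal \<bar>capped_moment_flux a R t\<bar> \<partial>lborel)
      \<le> (\<integral>\<^sup>+ t. indicator {0<..<T} t * ennreal c\<^sub>1 + ennreal c\<^sub>2 * (indicator {0..T} t * Q t) \<partial>lborel)"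
    by (intro nn_integral_mono pointwise)
  also have "\<dots> \<le> (\<integral>\<^sup>+ t. indicator {0<..<T} t * ennreal c\<^sub>1 \<partial>lborel)
      + (\<integral>\<^sup>+ t. ennreal c\<^sub>2 * (indicator {0..T} t * Q t) \<partial>lborel)"
    by (rule nn_integral_add_le) (auto simp: indicator_def)
  also have "(\<integral>\<^sup>+ t. indicator {0<..<T} t * ennreal c\<^sub>1 \<partial>lborel) = ennreal c\<^sub>1 * ennreal T"
    using T nn_integral_cmult_indicator[of "{0<..<T}" lborel "ennreal c\<^sub>1"] by (simp add: mult.commute)
  also have "(\<integral>\<^sup>+ t. ennreal c\<^sub>2 * (indicator {0..T} t * Q t) \<partial>lborel) \<le> ennreal c\<^sub>2 * ennreal drift_energy"
    unfolding Q_def nn_integral_drift_eq[symmetric] by (rule nn_integral_cmult_le[OF c(2)])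
  also have "ennreal c\<^sub>1 * ennreal T + ennreal c\<^sub>2 * ennreal drift_energy
      = ennreal (2 * p * d * Z * T + p * d powr (1 - p) * drift_energy)"
    using c T drift_energy_nonneg by (simp add: c\<^sub>1_def c\<^sub>2_def ennreal_mult[symmetric] ennreal_plus)
  finally show ?thesis by simp
qed

lemma arctan_capped_moment_increment_le:
  assumes a: "0 < a" and R: "0 < R" and d: "0 < d" and Z: "0 \<le> Z"
    and Z_bound: "\<And>s. s \<in> {0..T} \<Longrightarrow>
      (\<integral>\<^sup>+\<mu>. ennreal (arctan_cap' a (capped_moment p R \<mu>) * capped_moment p R \<mu>) \<partial>(M s)) \<le> ennreal Z"
    and t: "t \<in> {0..T}"
  shows "(\<integral>\<mu>. arctan_cap a (capped_moment p R \<mu>) \<partial>(M t)) - (\<integral>\<mu>. arctan_cap a (capped_moment p R \<mu>) \<partial>(M 0))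
    \<le> 2 * p * d * Z * T + p * d powr (1 - p) * drift_energy"
proof (rule weak_derivative_increment_le[where h = "capped_moment_flux a R"
      and f = "\<lambda>t. \<integral>\<mu>. arctan_cap a (capped_moment p R \<mu>) \<partial>(M t)"])
  show "continuous_on {0..T} (\<lambda>t. \<integral>\<mu>. arctan_cap a (capped_moment p R \<mu>) \<partial>(M t))"
    unfolding capped_moment_def
    by (intro continuous_on_narrow_curve_integral[OF curve, where B = "3/2 * R" and C = "a * pi / 2"]
        continuous_on_capped_bracket_pow[OF R] continuous_on_arctan_cap
        abs_capped_bracket_pow_le[OF R] abs_arctan_cap_le[OF a])
  show "0 \<le> 2 * p * d * Z * T + p * d powr (1 - p) * drift_energy"
    using p d Z T drift_energy_nonneg by simp
qed (use capped_moment_weak_derivative[OF a R] capped_moment_flux_integral_le[OF a R d Z Z_bound] t in auto)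

lemma tendsto_integral_arctan_cap_infinite_moment:
  assumes a: "0 < a" and t: "t \<in> {0..T}"
  defines "N \<equiv> {\<mu> \<in> space (M t). bracket_moment p \<mu> = \<infinity>}"
  shows "(\<lambda>n. \<integral>\<mu>. indicator N \<mu> * arctan_cap a (capped_moment p (real n + 1) \<mu>) \<partial>(M t))
    \<longlonglongrightarrow> a * pi / 2 * measure (M t) N"
proof -
  interpret prob_space "M t" using prob_space_M[OF t] .
  have N: "N \<in> sets (M t)"
    unfolding N_def using measurable_M[OF borel_measurable_bracket_moment t] by measurable
  have "(\<lambda>n. \<integral>\<mu>. indicator N \<mu> * arctan_cap a (capped_moment p (real n + 1) \<mu>) \<partial>(M t))
      \<longlonglongrightarrow> (\<integral>\<mu>. indicator N \<mu> * (a * pi / 2) \<partial>(M t))"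
  proof (rule integral_dominated_convergence[where w = "\<lambda>_. a * pi / 2"])
    show "(\<lambda>\<mu>. indicator N \<mu> * (a * pi / 2)) \<in> borel_measurable (M t)"
      using N by measurable
    show "(\<lambda>\<mu>. indicator N \<mu> * arctan_cap a (capped_moment p (real n + 1) \<mu>)) \<in> borel_measurable (M t)" for n
      using N measurable_M[OF borel_measurable_arctan_cap_capped_moment t] by (intro borel_measurable_times) auto
    show "AE \<mu> in M t. norm (indicator N \<mu> * arctan_cap a (capped_moment p (real n + 1) \<mu>)) \<le> a * pi / 2" for n
      using abs_arctan_cap_le[OF a] a by (intro AE_I2) (auto simp: indicator_def)
    show "AE \<mu> in M t. (\<lambda>n. indicator N \<mu> * arctan_cap a (capped_moment p (real n + 1) \<mu>))
        \<longlonglongrightarrow> indicator N \<mu> * (a * pi / 2)"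
    proof (rule AE_I2)
      fix \<mu> assume "\<mu> \<in> space (M t)"
      show "(\<lambda>n. indicator N \<mu> * arctan_cap a (capped_moment p (real n + 1) \<mu>)) \<longlonglongrightarrow> indicator N \<mu> * (a * pi / 2)"
      proof (cases "\<mu> \<in> N")
        case True
        then have "\<mu> \<in> Pd" "bracket_moment p \<mu> = \<infinity>" using space_M[OF t] by (auto simp: N_def)
        from tendsto_arctan_cap_at_top[OF a filterlim_capped_moment_at_top[OF this(1) p this(2)]]
        show ?thesis using True by simp
      qed simp
    qed
  qed simp
  then show ?thesis using N by (simp add: mult_ac)
qed

lemma integrable_arctan_capped_moment:
  "0 < a \<Longrightarrow> 0 < R \<Longrightarrow> s \<in> {0..T} \<Longrightarrow> integrable (M s) (\<lambda>\<mu>. arctan_cap a (capped_moment p R \<mu>))"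
  by (rule integrable_M[OF _ borel_measurable_arctan_cap_capped_moment abs_arctan_cap_le])

lemma arctan_capped_moment_increment_uniform_le:
  assumes a: "0 < a" and R: "0 < R" and d: "0 < d" and t: "t \<in> {0..T}"
  shows "(\<integral>\<mu>. arctan_cap a (capped_moment p R \<mu>) \<partial>(M t)) - (\<integral>\<mu>. arctan_cap a (capped_moment p R \<mu>) \<partial>(M 0))
    \<le> p * d * a * T + p * d powr (1 - p) * drift_energy"
proof -
  have "(\<integral>\<mu>. arctan_cap a (capped_moment p R \<mu>) \<partial>(M t)) - (\<integral>\<mu>. arctan_cap a (capped_moment p R \<mu>) \<partial>(M 0))
    \<le> 2 * p * d * (a / 2) * T + p * d powr (1 - p) * drift_energy"
  proof (rule arctan_capped_moment_increment_le[OF a R d _ _ t])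
    show "0 \<le> a / 2" using a by simp
    fix s assume s: "s \<in> {0..T}"
    interpret prob_space "M s" using prob_space_M[OF s] .
    have "(\<integral>\<^sup>+\<mu>. ennreal (arctan_cap' a (capped_moment p R \<mu>) * capped_moment p R \<mu>) \<partial>(M s))
        \<le> (\<integral>\<^sup>+\<mu>. ennreal (a / 2) \<partial>(M s))"
      using capped_moment_nonneg[OF _ R] space_M[OF s]
      by (intro nn_integral_mono ennreal_leI arctan_cap'_mult_le[OF a]) auto
    then show "(\<integral>\<^sup>+\<mu>. ennreal (arctan_cap' a (capped_moment p R \<mu>) * capped_moment p R \<mu>) \<partial>(M s))
        \<le> ennreal (a / 2)"
      by (simp add: emeasure_space_1)
  qed
  then show ?thesis by simp
qed

lemma integral_arctan_capped_moment_le: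
  assumes fin: "AE \<mu> in M s. bracket_moment p \<mu> < \<infinity>" and a: "0 < a" and R: "0 < R" and s: "s \<in> {0..T}"
  shows "(\<integral>\<mu>. arctan_cap a (capped_moment p R \<mu>) \<partial>(M s))
    \<le> a * (\<integral>\<mu>. arctan (enn2real (bracket_moment p \<mu>) / a) \<partial>(M s))"
proof -
  have "(\<integral>\<mu>. arctan_cap a (capped_moment p R \<mu>) \<partial>(M s))
      \<le> (\<integral>\<mu>. arctan_cap a (enn2real (bracket_moment p \<mu>)) \<partial>(M s))"
  proof (rule integral_mono_AE[OF integrable_arctan_capped_moment[OF a R s]])
    show "integrable (M s) (\<lambda>\<mu>. arctan_cap a (enn2real (bracket_moment p \<mu>)))"
      by (intro integrable_M[OF s _ abs_arctan_cap_le[OF a]] borel_measurable_continuous_on[OF continuous_on_arctan_cap]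
          borel_measurable_enn2real borel_measurable_bracket_moment)
    show "AE \<mu> in M s. arctan_cap a (capped_moment p R \<mu>) \<le> arctan_cap a (enn2real (bracket_moment p \<mu>))"
      using fin
    proof (rule AE_mp, intro AE_I2 impI)
      fix \<mu> assume "\<mu> \<in> space (M s)" and fin: "bracket_moment p \<mu> < \<infinity>"
      then have \<mu>: "\<mu> \<in> Pd" using space_M[OF s] by simp
      have "enn2real (ennreal (capped_moment p R \<mu>)) \<le> enn2real (bracket_moment p \<mu>)"
        using capped_moment_le_bracket_moment[OF \<mu> R] fin by (intro enn2real_mono) auto
      then have "capped_moment p R \<mu> \<le> enn2real (bracket_moment p \<mu>)"
        using capped_moment_nonneg[OF \<mu> R] by simp
      then show "arctan_cap a (capped_moment p R \<mu>) \<le> arctan_cap a (enn2real (bracket_moment p \<mu>))"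
        by (rule arctan_cap_mono[OF a])
    qed
  qed
  then show ?thesis by (simp add: arctan_cap_def)
qed

text \<open>Letting \<open>R \<rightarrow> \<infinity>\<close> in the arctan estimate: each measure of infinite moment at time \<open>t\<close>
  contributes the full height \<open>a\<pi>/2\<close> of the cap.\<close>

lemma measure_infinite_bracket_moment_le:
  assumes AE0: "AE \<mu> in M 0. bracket_moment p \<mu> < \<infinity>" and a: "0 < a" and d: "0 < d" and t: "t \<in> {0..T}"
  shows "pi / 2 * measure (M t) {\<mu> \<in> space (M t). bracket_moment p \<mu> = \<infinity>}
    \<le> (\<integral>\<mu>. arctan (enn2real (bracket_moment p \<mu>) / a) \<partial>(M 0)) + p * d * T + p * d powr (1 - p) * drift_energy / a"
proof -
  define N where "N = {\<mu> \<in> space (M t). bracket_moment p \<mu> = \<infinity>}"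
  define J where "J = (\<integral>\<mu>. arctan (enn2real (bracket_moment p \<mu>) / a) \<partial>(M 0))"
  have t0: "0 \<in> {0..T}" using T by simp
  have R: "0 < real n + 1" for n :: nat by simp
  have N: "N \<in> sets (M t)"
    unfolding N_def using measurable_M[OF borel_measurable_bracket_moment t] by measurable
  have on_N: "(\<integral>\<mu>. indicator N \<mu> * arctan_cap a (capped_moment p (real n + 1) \<mu>) \<partial>(M t))
      \<le> (\<integral>\<mu>. arctan_cap a (capped_moment p (real n + 1) \<mu>) \<partial>(M t))" for n
  proof (rule integral_mono[OF _ integrable_arctan_capped_moment[OF a R t]])
    show "integrable (M t) (\<lambda>\<mu>. indicator N \<mu> * arctan_cap a (capped_moment p (real n + 1) \<mu>))"
      using integrable_real_mult_indicator[OF N integrable_arctan_capped_moment[OF a R t]]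
      by (simp add: mult.commute)
    fix \<mu> assume "\<mu> \<in> space (M t)"
    then have "0 \<le> arctan_cap a (capped_moment p (real n + 1) \<mu>)"
      using capped_moment_nonneg[OF _ R] space_M[OF t] by (intro arctan_cap_nonneg[OF a]) auto
    then show "indicator N \<mu> * arctan_cap a (capped_moment p (real n + 1) \<mu>) \<le> arctan_cap a (capped_moment p (real n + 1) \<mu>)"
      by (simp add: indicator_def)
  qed
  have lim: "(\<lambda>n. \<integral>\<mu>. indicator N \<mu> * arctan_cap a (capped_moment p (real n + 1) \<mu>) \<partial>(M t))
      \<longlonglongrightarrow> a * pi / 2 * measure (M t) N"
    unfolding N_def by (rule tendsto_integral_arctan_cap_infinite_moment[OF a t])
  have "a * pi / 2 * measure (M t) N \<le> a * J + p * d * a * T + p * d powr (1 - p) * drift_energy"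
  proof (rule tendsto_upperbound[OF lim _ trivial_limit_sequentially], intro always_eventually allI)
    fix n
    show "(\<integral>\<mu>. indicator N \<mu> * arctan_cap a (capped_moment p (real n + 1) \<mu>) \<partial>(M t))
        \<le> a * J + p * d * a * T + p * d powr (1 - p) * drift_energy"
      using on_N[of n] arctan_capped_moment_increment_uniform_le[OF a R d t, of n]
        integral_arctan_capped_moment_le[OF AE0 a R t0, of n] unfolding J_def by linarith
  qed
  then have "a * (pi / 2 * measure (M t) N) \<le> a * (J + p * d * T + p * d powr (1 - p) * drift_energy / a)"
    using a by (simp add: algebra_simps)
  then show ?thesis using a by (simp add: N_def J_def)
qed

lemma measure_infinite_bracket_moment_eq_0:
  assumes AE0: "AE \<mu> in M 0. bracket_moment p \<mu> < \<infinity>" and t: "t \<in> {0..T}"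
  shows "measure (M t) {\<mu> \<in> space (M t). bracket_moment p \<mu> = \<infinity>} = 0"
proof -
  have t0: "0 \<in> {0..T}" using T by simp
  interpret M\<^sub>0: prob_space "M 0" using prob_space_M[OF t0] .
  define N where "N = {\<mu> \<in> space (M t). bracket_moment p \<mu> = \<infinity>}"
  define J where "J a = (\<integral>\<mu>. arctan (enn2real (bracket_moment p \<mu>) / a) \<partial>(M 0))" for a
  have J: "(\<lambda>j. J (real j + 1)) \<longlonglongrightarrow> 0"
    unfolding J_def
    by (intro tendsto_integral_arctan_div_0 M\<^sub>0.finite_measure_axioms borel_measurable_enn2real
        measurable_M[OF borel_measurable_bracket_moment t0])
  have "measure (M t) N \<le> 0"
  proof (rule field_le_epsilon)
    fix e :: real assume "0 < e"
    define d where "d = e / (2 * p * T)"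
    have d: "0 < d" using \<open>0 < e\<close> p T by (simp add: d_def)
    have "(\<lambda>j. J (real j + 1) + p * d * T + p * d powr (1 - p) * drift_energy / (real j + 1))
        \<longlonglongrightarrow> 0 + p * d * T + 0"
      using J by (intro tendsto_add tendsto_const tendsto_divide_0[OF tendsto_const]
          filterlim_at_top_imp_at_infinity real_Suc_at_top)
    then have "pi / 2 * measure (M t) N \<le> 0 + p * d * T + 0"
      by (rule tendsto_lowerbound)
        (use measure_infinite_bracket_moment_le[OF AE0 _ d t] in \<open>auto intro!: always_eventually simp: N_def J_def\<close>)
    also have "\<dots> = e / 2" using p T by (simp add: d_def)
    finally have "pi / 2 * measure (M t) N \<le> e / 2" .
    moreover have "measure (M t) N \<le> pi / 2 * measure (M t) N"
      using mult_right_mono[of 1 "pi / 2" "measure (M t) N"] pi_gt3 by simp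
    ultimately show "measure (M t) N \<le> 0 + e" using \<open>0 < e\<close> by linarith
  qed
  then show ?thesis using measure_nonneg[of "M t" N] unfolding N_def by linarith
qed

lemma AE_pmom_finite:
  assumes AE0: "AE \<mu> in M 0. pmom p \<mu> < \<infinity>" and t: "t \<in> {0..T}"
  shows "AE \<mu> in M t. pmom p \<mu> < \<infinity>"
proof -
  have t0: "0 \<in> {0..T}" using T by simp
  interpret prob_space "M t" using prob_space_M[OF t] .
  define N where "N = {\<mu> \<in> space (M t). bracket_moment p \<mu> = \<infinity>}"
  have N: "N \<in> sets (M t)"
    unfolding N_def using measurable_M[OF borel_measurable_bracket_moment t] by measurable
  have "AE \<mu> in M 0. bracket_moment p \<mu> < \<infinity>"
    using AE0
  proof (rule AE_mp, intro AE_I2 impI)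
    fix \<mu> assume "\<mu> \<in> space (M 0)" "pmom p \<mu> < \<infinity>"
    then show "bracket_moment p \<mu> < \<infinity>" using space_M[OF t0] by (intro bracket_moment_less_top[OF p]) auto
  qed
  then have "emeasure (M t) N = 0"
    using measure_infinite_bracket_moment_eq_0[OF _ t] N by (simp add: N_def emeasure_eq_measure)
  then have "AE \<mu> in M t. \<mu> \<notin> N" using N by (intro AE_I'[of N]) auto
  then show ?thesis
  proof (rule AE_mp, intro AE_I2 impI)
    fix \<mu> assume "\<mu> \<in> space (M t)" "\<mu> \<notin> N"
    then have "bracket_moment p \<mu> < \<infinity>" by (auto simp: N_def less_top)
    then show "pmom p \<mu> < \<infinity>" using pmom_le_bracket_moment[OF p, of \<mu>] by (rule le_less_trans[rotated])
  qed
qed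

lemma integrable_capped_moment_M:
  assumes "t \<in> {0..T}" "0 < R"
  shows "integrable (M t) (capped_moment p R)"
  using assms by (intro integrable_M[where B = "3/2 * R"] borel_measurable_capped_moment abs_capped_moment_le)

lemma nn_integral_capped_moment_M:
  assumes "t \<in> {0..T}" "0 < R"
  shows "(\<integral>\<^sup>+\<mu>. ennreal (capped_moment p R \<mu>) \<partial>(M t)) = ennreal (\<integral>\<mu>. capped_moment p R \<mu> \<partial>(M t))"
  using assms space_M capped_moment_nonneg
  by (intro nn_integral_eq_integral integrable_capped_moment_M AE_I2) auto

lemma integral_capped_moment_nonneg: "s \<in> {0..T} \<Longrightarrow> 0 < R \<Longrightarrow> 0 \<le> (\<integral>\<mu>. capped_moment p R \<mu> \<partial>(M s))"
  using capped_moment_nonneg space_M by (intro integral_nonneg_AE AE_I2) auto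

lemma integral_capped_moment_le: "s \<in> {0..T} \<Longrightarrow> 0 < R \<Longrightarrow> (\<integral>\<mu>. capped_moment p R \<mu> \<partial>(M s)) \<le> 3/2 * R"
proof -
  assume s: "s \<in> {0..T}" and R: "0 < R"
  interpret prob_space "M s" using prob_space_M[OF s] .
  have "(\<integral>\<mu>. capped_moment p R \<mu> \<partial>(M s)) \<le> (\<integral>\<mu>. 3/2 * R \<partial>(M s))"
    using integrable_capped_moment_M[OF s R] capped_moment_le[OF _ R] space_M[OF s] by (intro integral_mono) auto
  then show ?thesis by (simp add: prob_space)
qed

lemma nn_integral_bracket_moment_finite:
  assumes fin: "(\<integral>\<^sup>+\<mu>. pmom p \<mu> \<partial>(M s)) < \<infinity>" and s: "s \<in> {0..T}"
  shows "(\<integral>\<^sup>+\<mu>. bracket_moment p \<mu> \<partial>(M s)) < \<infinity>"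
proof -
  interpret prob_space "M s" using prob_space_M[OF s] .
  have "(\<integral>\<^sup>+\<mu>. bracket_moment p \<mu> \<partial>(M s)) \<le> (\<integral>\<^sup>+\<mu>. ennreal (2 powr (p / 2)) * (1 + pmom p \<mu>) \<partial>(M s))"
    using bracket_moment_le[OF p] space_M[OF s] by (intro nn_integral_mono) auto
  also have "\<dots> = ennreal (2 powr (p / 2)) * (1 + (\<integral>\<^sup>+\<mu>. pmom p \<mu> \<partial>(M s)))"
    using measurable_M[OF borel_measurable_pmom s]
    by (simp add: nn_integral_cmult nn_integral_add emeasure_space_1)
  also have "\<dots> < \<infinity>" using fin by (simp add: ennreal_mult_less_top less_top)
  finally show ?thesis .
qed

text \<open>With \<open>a = 3R/2\<close> the cap satisfies \<open>s/2 \<le> \<Psi>\<^sub>a(s) \<le> s\<close> on the range of \<open>m\<^sub>R\<close>, so the arctan estimate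
  becomes a linear one for the capped moments themselves.\<close>

lemma capped_moment_integral_half_le:
  assumes R: "0 < R" and d: "0 < d" and Y: "0 \<le> Y" "\<And>s. s \<in> {0..T} \<Longrightarrow> (\<integral>\<mu>. capped_moment p R \<mu> \<partial>(M s)) \<le> Y"
    and s: "s \<in> {0..T}"
  shows "(\<integral>\<mu>. capped_moment p R \<mu> \<partial>(M s)) / 2
    \<le> (\<integral>\<mu>. capped_moment p R \<mu> \<partial>(M 0)) + 2 * p * d * Y * T + p * d powr (1 - p) * drift_energy"
proof -
  define a where "a = 3/2 * R"
  have a: "0 < a" using R by (simp add: a_def)
  have t0: "0 \<in> {0..T}" using T by simp
  have range: "0 \<le> capped_moment p R \<mu>" "capped_moment p R \<mu> \<le> a" if "\<mu> \<in> space (M s')" "s' \<in> {0..T}" for \<mu> s'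
    using that space_M capped_moment_nonneg[OF _ R] capped_moment_le[OF _ R] by (auto simp: a_def)
  have "(\<integral>\<mu>. arctan_cap a (capped_moment p R \<mu>) \<partial>(M s)) - (\<integral>\<mu>. arctan_cap a (capped_moment p R \<mu>) \<partial>(M 0))
      \<le> 2 * p * d * Y * T + p * d powr (1 - p) * drift_energy"
  proof (rule arctan_capped_moment_increment_le[OF a R d Y(1) _ s])
    fix s' assume s': "s' \<in> {0..T}"
    have "(\<integral>\<^sup>+\<mu>. ennreal (arctan_cap' a (capped_moment p R \<mu>) * capped_moment p R \<mu>) \<partial>(M s'))
        \<le> (\<integral>\<^sup>+\<mu>. ennreal (capped_moment p R \<mu>) \<partial>(M s'))"
      using range[OF _ s'] arctan_cap'_bounds
      by (intro nn_integral_mono ennreal_leI mult_left_le_one_le) (auto intro: less_imp_le)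
    also have "\<dots> \<le> ennreal Y"
      unfolding nn_integral_capped_moment_M[OF s' R] using Y(2)[OF s'] by (rule ennreal_leI)
    finally show "(\<integral>\<^sup>+\<mu>. ennreal (arctan_cap' a (capped_moment p R \<mu>) * capped_moment p R \<mu>) \<partial>(M s'))
        \<le> ennreal Y" .
  qed
  moreover have "(\<integral>\<mu>. capped_moment p R \<mu> \<partial>(M s)) / 2 \<le> (\<integral>\<mu>. arctan_cap a (capped_moment p R \<mu>) \<partial>(M s))"
  proof -
    have "(\<integral>\<mu>. capped_moment p R \<mu> \<partial>(M s)) / 2 = (\<integral>\<mu>. capped_moment p R \<mu> / 2 \<partial>(M s))" by simp
    also have "\<dots> \<le> (\<integral>\<mu>. arctan_cap a (capped_moment p R \<mu>) \<partial>(M s))"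
      using integrable_capped_moment_M[OF s R] integrable_arctan_capped_moment[OF a R s] range[OF _ s]
      by (intro integral_mono arctan_cap_ge_half[OF a]) auto
    finally show ?thesis .
  qed
  moreover have "(\<integral>\<mu>. arctan_cap a (capped_moment p R \<mu>) \<partial>(M 0)) \<le> (\<integral>\<mu>. capped_moment p R \<mu> \<partial>(M 0))"
    using integrable_capped_moment_M[OF t0 R] integrable_arctan_capped_moment[OF a R t0] range[OF _ t0]
    by (intro integral_mono arctan_cap_le[OF a]) auto
  ultimately show ?thesis by linarith
qed

text \<open>Choosing \<open>d = 1/(8pT)\<close> absorbs the supremum over time into the left-hand side.\<close>

lemma capped_moment_integral_le:
  assumes A\<^sub>0: "(\<integral>\<^sup>+\<mu>. bracket_moment p \<mu> \<partial>(M 0)) < \<infinity>" and R: "0 < R" and t: "t \<in> {0..T}"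
  shows "(\<integral>\<mu>. capped_moment p R \<mu> \<partial>(M t))
    \<le> 4 * enn2real (\<integral>\<^sup>+\<mu>. bracket_moment p \<mu> \<partial>(M 0)) + 4 * p * (1 / (8 * p * T)) powr (1 - p) * drift_energy"
proof -
  define v where "v s = (\<integral>\<mu>. capped_moment p R \<mu> \<partial>(M s))" for s
  define Y where "Y = Sup (v ` {0..T})"
  define d where "d = 1 / (8 * p * T)"
  define C where "C = p * d powr (1 - p) * drift_energy"
  have t0: "0 \<in> {0..T}" using T by simp
  have d: "0 < d" using p T by (simp add: d_def)
  have v_range: "0 \<le> v s" "v s \<le> 3/2 * R" if "s \<in> {0..T}" for s
    using integral_capped_moment_nonneg[OF that R] integral_capped_moment_le[OF that R] by (simp_all add: v_def)
  have v_le_Y: "v s \<le> Y" if "s \<in> {0..T}" for s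
    unfolding Y_def using that v_range by (intro cSup_upper bdd_aboveI[of _ "3/2 * R"]) auto
  have Y: "0 \<le> Y" using v_le_Y[OF t0] v_range[OF t0] by linarith
  have v0: "v 0 \<le> enn2real (\<integral>\<^sup>+\<mu>. bracket_moment p \<mu> \<partial>(M 0))"
  proof -
    have "ennreal (v 0) \<le> (\<integral>\<^sup>+\<mu>. bracket_moment p \<mu> \<partial>(M 0))"
      unfolding v_def nn_integral_capped_moment_M[OF t0 R, symmetric]
      using capped_moment_le_bracket_moment[OF _ R] space_M[OF t0] by (intro nn_integral_mono) auto
    then have "enn2real (ennreal (v 0)) \<le> enn2real (\<integral>\<^sup>+\<mu>. bracket_moment p \<mu> \<partial>(M 0))"
      using A\<^sub>0 by (intro enn2real_mono) auto
    then show ?thesis using v_range[OF t0] by simp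
  qed
  have step: "v s / 2 \<le> enn2real (\<integral>\<^sup>+\<mu>. bracket_moment p \<mu> \<partial>(M 0)) + Y / 4 + C" if s: "s \<in> {0..T}" for s
  proof -
    have "2 * p * d * Y * T = Y / 4" using p T by (simp add: d_def field_simps)
    then show ?thesis
      using capped_moment_integral_half_le[OF R d Y v_le_Y[unfolded v_def] s] v0
      unfolding v_def C_def by linarith
  qed
  have "Sup (v ` {0..T}) \<le> 2 * enn2real (\<integral>\<^sup>+\<mu>. bracket_moment p \<mu> \<partial>(M 0)) + Y / 2 + 2 * C"
  proof (rule cSup_least)
    show "v ` {0..T} \<noteq> {}" using t0 by blast
    fix y assume "y \<in> v ` {0..T}"
    then obtain s where "s \<in> {0..T}" "y = v s" by blast
    with step[of s] show "y \<le> 2 * enn2real (\<integral>\<^sup>+\<mu>. bracket_moment p \<mu> \<partial>(M 0)) + Y / 2 + 2 * C" by simp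
  qed
  then have "Y \<le> 2 * enn2real (\<integral>\<^sup>+\<mu>. bracket_moment p \<mu> \<partial>(M 0)) + Y / 2 + 2 * C"
    unfolding Y_def .
  then show ?thesis using v_le_Y[OF t] by (simp add: v_def C_def d_def)
qed

lemma nn_integral_pmom_finite:
  assumes fin\<^sub>0: "(\<integral>\<^sup>+\<mu>. pmom p \<mu> \<partial>(M 0)) < \<infinity>" and t: "t \<in> {0..T}"
  shows "(\<integral>\<^sup>+\<mu>. pmom p \<mu> \<partial>(M t)) < \<infinity>"
proof -
  have t0: "0 \<in> {0..T}" using T by simp
  define B where "B = 4 * enn2real (\<integral>\<^sup>+\<mu>. bracket_moment p \<mu> \<partial>(M 0)) + 4 * p * (1 / (8 * p * T)) powr (1 - p) * drift_energy"
  have A\<^sub>0: "(\<integral>\<^sup>+\<mu>. bracket_moment p \<mu> \<partial>(M 0)) < \<infinity>"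
    by (rule nn_integral_bracket_moment_finite[OF fin\<^sub>0 t0])
  have "(\<integral>\<^sup>+\<mu>. pmom p \<mu> \<partial>(M t)) \<le> (\<integral>\<^sup>+\<mu>. bracket_moment p \<mu> \<partial>(M t))"
    by (intro nn_integral_mono pmom_le_bracket_moment p)
  also have "\<dots> \<le> (\<integral>\<^sup>+\<mu>. liminf (\<lambda>n. ennreal (capped_moment p (real n + 1) \<mu>)) \<partial>(M t))"
    using bracket_moment_le_liminf[OF _ p] space_M[OF t] by (intro nn_integral_mono) auto
  also have "\<dots> \<le> liminf (\<lambda>n. \<integral>\<^sup>+\<mu>. ennreal (capped_moment p (real n + 1) \<mu>) \<partial>(M t))"
    by (intro nn_integral_liminf measurable_M[OF _ t] measurable_compose[OF borel_measurable_capped_moment measurable_ennreal])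
      simp
  also have "\<dots> \<le> limsup (\<lambda>n. \<integral>\<^sup>+\<mu>. ennreal (capped_moment p (real n + 1) \<mu>) \<partial>(M t))"
    by (rule Liminf_le_Limsup) simp
  also have "\<dots> \<le> ennreal B"
  proof (rule Limsup_bounded, intro always_eventually allI)
    fix n :: nat
    show "(\<integral>\<^sup>+\<mu>. ennreal (capped_moment p (real n + 1) \<mu>) \<partial>(M t)) \<le> ennreal B"
      unfolding nn_integral_capped_moment_M[OF t, of "real n + 1", simplified] B_def
      by (intro ennreal_leI capped_moment_integral_le[OF A\<^sub>0 _ t, of "real n + 1", simplified])
  qed
  finally show ?thesis by (rule le_less_trans) simp
qed

end

theorem lemma6p1:
  fixes p T :: real
    and M :: "real \<Rightarrow> 'a::euclidean_space measure measure"
    and b :: "real \<Rightarrow> 'a \<Rightarrow> 'a measure \<Rightarrow> 'a"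
  assumes p: "p \<ge> 1"
    and curve: "narrow_curve T M"
    and b_meas: "(\<lambda>(t, x, \<mu>). b t x \<mu>) \<in>
        borel_measurable (restrict_space borel {0..T} \<Otimes>\<^sub>M (borel :: 'a measure) \<Otimes>\<^sub>M prob_algebra (borel :: 'a measure))"
    and b_int: "(\<integral>\<^sup>+ t. indicator {0..T} t *
        (\<integral>\<^sup>+ \<mu>. (\<integral>\<^sup>+ x. ennreal (norm (b t x \<mu>) powr p) \<partial>\<mu>) \<partial>(M t)) \<partial>lborel) < \<infinity>"
    and CE: "\<And>k \<phi> g \<Psi> D \<eta>.
        (\<forall>i<k. C1c_grad (\<phi> i) (g i)) \<Longrightarrow> C1b_partials k \<Psi> D \<Longrightarrow> test_fun T \<eta> \<Longrightarrow>
        - (LINT t:{0<..<T}|lborel. deriv \<eta> t *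
              (\<integral>\<mu>. \<Psi> (\<lambda>i. \<integral>x. \<phi> i x \<partial>\<mu>) \<partial>(M t)))
        = (LINT t:{0<..<T}|lborel. \<eta> t *
              (\<integral>\<mu>. (\<integral>x. (\<Sum>i<k. D i (\<lambda>j. \<integral>y. \<phi> j y \<partial>\<mu>) *\<^sub>R g i x) \<bullet> b t x \<mu> \<partial>\<mu>) \<partial>(M t)))"
  shows "((AE \<mu> in M 0. pmom p \<mu> < \<infinity>) \<longrightarrow> (\<forall>t\<in>{0..T}. AE \<mu> in M t. pmom p \<mu> < \<infinity>))
       \<and> (((AE \<mu> in M 0. pmom p \<mu> < \<infinity>) \<and> (\<integral>\<^sup>+ \<mu>. pmom p \<mu> \<partial>(M 0)) < \<infinity>) \<longrightarrow>
          (\<forall>t\<in>{0..T}. (AE \<mu> in M t. pmom p \<mu> < \<infinity>) \<and> (\<integral>\<^sup>+ \<mu>. pmom p \<mu> \<partial>(M t)) < \<infinity>))"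
proof (cases "T > 0")
  case True
  interpret weak_continuity_equation p T M b
    by (rule weak_continuity_equation.intro[OF p True curve b_meas b_int CE])
  show ?thesis using AE_pmom_finite nn_integral_pmom_finite by blast
next
  case False
  then have "{0..T} \<subseteq> {0}" by auto
  then show ?thesis by auto
qed

end
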